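(* Let $\mathsf F$ be a $\Gamma$-graded field, $\varepsilon\in\Gamma_{\mathsf F}$, and $\Phi=(\mathsf V,q,b)$ an $\varepsilon$-shifted quadratic space over $\mathsf F$ of type $T\in\{I,II,\tau\text{-}III\}$ ($\tau\in\mathsf F_\varepsilon\setminus\{0\}$). For $\Lambda\in\Gamma/\Gamma_{\mathsf F}$ let $\Phi_\Lambda=(\mathsf V_\Lambda,q|_{\mathsf V_\Lambda},b|_{\mathsf V_\Lambda})$, and for an orbit $P=\{\Lambda,\bar\Lambda\}$ of the involution $[\gamma]\mapsto[\bar\gamma]$ on $(\Gamma/\Gamma_{\mathsf F})\setminus(\frac12\Gamma_{\mathsf F}/\Gamma_{\mathsf F})$ let $\Phi_P$ be the restriction of $\Phi$ to $\mathsf V_\Lambda+\mathsf V_{\bar\Lambda}$. Then $$\Phi=\Big(\mathop{\perp}_{\Lambda\in\frac12\Gamma_{\mathsf F}/\Gamma_{\mathsf F}}\Phi_\Lambda\Big)\perp\Psi,\qquad\Psi=\mathop{\perp}_{P}\Phi_P,$$ where $\Psi$ and all $\Phi_\Lambda$ ($\Lambda\in\frac12\Gamma_{\mathsf F}/\Gamma_{\mathsf F}$) are $\varepsilon$-shifted spaces of type $T$, and $\Psi$ is metabolic.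
   Context: $\Gamma$ is a divisible torsion-free abelian group; $\mathsf F=\bigoplus\mathsf F_\gamma$ a $\Gamma$-graded field (graded commutative ring, nonzero homogeneous elements invertible), $\Gamma_{\mathsf F}=\{\gamma:\mathsf F_\gamma\ne0\}$, $\frac12\Gamma_{\mathsf F}=\{\gamma:2\gamma\in\Gamma_{\mathsf F}\}$. For $\gamma\in\Gamma$: $[\gamma]=\gamma+\Gamma_{\mathsf F}$, $\mathsf V_{[\gamma]}=\bigoplus_{\delta\in\Gamma_{\mathsf F}}\mathsf V_{\gamma+\delta}$, $\bar\gamma=-(\gamma+\varepsilon)$; since $\varepsilon\in\Gamma_{\mathsf F}$, $[\gamma]=[\bar\gamma]$ for $\gamma\in\frac12\Gamma_{\mathsf F}$ and the involution has no fixed points outside $\frac12\Gamma_{\mathsf F}/\Gamma_{\mathsf F}$. An $\varepsilon$-shifted quadratic space is $(\mathsf V,q,b)$ with $\mathsf V$ a finite-dimensional graded $\mathsf F$-vector space, $q$ a graded quadratic form ($q(\lambda x)=\lambda^2q(x)$, polar form $b_q$ $0$-shifted bilinear, $q(\mathsf V_\gamma)\subset\mathsf F_{2\gamma}$), $b$ a nondegenerate symmetric bilinear form with $b(\mathsf V_\gamma,\mathsf V_\delta)\subset\mathsf F_{\gamma+\delta+\varepsilon}$, and $b_q=\lambda b$ for some $\lambda\in\mathsf F$. Types: $I$: $\varepsilon=0$, $b=b_q$ (or $\mathsf V=0$); $II$: $q$ totally singular ($q(x+y)=q(x)+q(y)$) and $b$ alternating; $\tau$-$III$: $q(x)=\tau^{-1}b(x,x)$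 for all $x$. Metabolic: there is a graded subspace $\mathsf L$ with $\dim\mathsf L=\frac12\dim\mathsf V$ and $q(\mathsf L)=0=b(\mathsf L,\mathsf L)$. Orthogonal sums are with respect to $b$. *)

theory Defs
  imports Main
begin

definition natmult :: "nat \<Rightarrow> 'g::ab_group_add \<Rightarrow> 'g" where
  "natmult n \<gamma> = (\<Sum>_\<in>{..<n}. \<gamma>)"

definition divisible_torsion_free :: "'g::ab_group_add itself \<Rightarrow> bool" where
  "divisible_torsion_free _ \<longleftrightarrow>
     (\<forall>(\<gamma>::'g) n. n > 0 \<longrightarrow> (\<exists>\<delta>. natmult n \<delta> = \<gamma>)) \<and>
     (\<forall>(\<gamma>::'g) n. n > 0 \<longrightarrow> natmult n \<gamma> = 0 \<longrightarrow> \<gamma> = 0)"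

definition gdecomp :: "('g \<Rightarrow> 'a::comm_monoid_add set) \<Rightarrow> 'a \<Rightarrow> ('g \<Rightarrow> 'a) \<Rightarrow> bool" where
  "gdecomp A x c \<longleftrightarrow> finite {\<gamma>. c \<gamma> \<noteq> 0} \<and> (\<forall>\<gamma>. c \<gamma> \<in> A \<gamma>) \<and> x = (\<Sum>\<gamma>\<in>{\<gamma>. c \<gamma> \<noteq> 0}. c \<gamma>)"

definition is_graded :: "('g \<Rightarrow> 'a::ab_group_add set) \<Rightarrow> bool" where
  "is_graded A \<longleftrightarrow> (\<forall>\<gamma>. 0 \<in> A \<gamma> \<and> (\<forall>x\<in>A \<gamma>. \<forall>y\<in>A \<gamma>. x + y \<in> A \<gamma> \<and> - x \<in> A \<gamma>))
                 \<and> (\<forall>x. \<exists>!c. gdecomp A x c)"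

definition hcomp :: "('g \<Rightarrow> 'a::comm_monoid_add set) \<Rightarrow> 'g \<Rightarrow> 'a \<Rightarrow> 'a" where
  "hcomp A \<gamma> x = (THE c. gdecomp A x c) \<gamma>"

definition homogeneous :: "('g \<Rightarrow> 'a set) \<Rightarrow> 'a \<Rightarrow> bool" where
  "homogeneous A x \<longleftrightarrow> (\<exists>\<gamma>. x \<in> A \<gamma>)"

definition graded_field :: "('g::ab_group_add \<Rightarrow> 'f::comm_ring_1 set) \<Rightarrow> bool" where
  "graded_field Fg \<longleftrightarrow> is_graded Fg \<and> 1 \<in> Fg 0 \<and>
     (\<forall>\<gamma> \<delta>. \<forall>x\<in>Fg \<gamma>. \<forall>y\<in>Fg \<delta>. x * y \<in> Fg (\<gamma> + \<delta>)) \<and>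
     (\<forall>\<gamma>. \<forall>x\<in>Fg \<gamma>. x \<noteq> 0 \<longrightarrow> (\<exists>y. x * y = 1))"

definition GammaF :: "('g \<Rightarrow> 'f::zero set) \<Rightarrow> 'g set" where
  "GammaF Fg = {\<gamma>. \<exists>x\<in>Fg \<gamma>. x \<noteq> 0}"

definition halfGammaF :: "('g::ab_group_add \<Rightarrow> 'f::zero set) \<Rightarrow> 'g set" where
  "halfGammaF Fg = {\<gamma>. \<gamma> + \<gamma> \<in> GammaF Fg}"

definition ginv :: "'f::comm_ring_1 \<Rightarrow> 'f" where
  "ginv t = (THE y. t * y = 1)"

definition graded_vspace ::
  "('g::ab_group_add \<Rightarrow> 'f::comm_ring_1 set) \<Rightarrow> ('f \<Rightarrow> 'v::ab_group_add \<Rightarrow> 'v) \<Rightarrow> ('g \<Rightarrow> 'v set) \<Rightarrow> bool" where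
  "graded_vspace Fg sc Vg \<longleftrightarrow>
     (\<forall>a x y. sc a (x + y) = sc a x + sc a y) \<and>
     (\<forall>a c x. sc (a + c) x = sc a x + sc c x) \<and>
     (\<forall>a c x. sc (a * c) x = sc a (sc c x)) \<and>
     (\<forall>x. sc 1 x = x) \<and>
     is_graded Vg \<and>
     (\<forall>\<gamma> \<delta>. \<forall>a\<in>Fg \<gamma>. \<forall>x\<in>Vg \<delta>. sc a x \<in> Vg (\<gamma> + \<delta>))"

definition lin_indep :: "('f::comm_ring_1 \<Rightarrow> 'v::ab_group_add \<Rightarrow> 'v) \<Rightarrow> 'v set \<Rightarrow> bool" where
  "lin_indep sc B \<longleftrightarrow> (\<forall>S a. finite S \<and> S \<subseteq> B \<and> (\<Sum>v\<in>S. sc (a v) v) = 0 \<longrightarrow> (\<forall>v\<in>S. a v = 0))"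

definition lin_span :: "('f::comm_ring_1 \<Rightarrow> 'v::ab_group_add \<Rightarrow> 'v) \<Rightarrow> 'v set \<Rightarrow> 'v set" where
  "lin_span sc B = {(\<Sum>v\<in>S. sc (a v) v) | S a. finite S \<and> S \<subseteq> B}"

definition hbasis :: "('g \<Rightarrow> 'v set) \<Rightarrow> ('f::comm_ring_1 \<Rightarrow> 'v::ab_group_add \<Rightarrow> 'v) \<Rightarrow> 'v set \<Rightarrow> 'v set \<Rightarrow> bool" where
  "hbasis Vg sc W B \<longleftrightarrow> B \<subseteq> W \<and> (\<forall>x\<in>B. homogeneous Vg x) \<and> lin_indep sc B \<and> lin_span sc B = W"

definition graded_subspace :: "('g \<Rightarrow> 'v set) \<Rightarrow> ('f::comm_ring_1 \<Rightarrow> 'v::ab_group_add \<Rightarrow> 'v) \<Rightarrow> 'v set \<Rightarrow> bool" where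
  "graded_subspace Vg sc W \<longleftrightarrow> 0 \<in> W \<and> (\<forall>x\<in>W. \<forall>y\<in>W. x + y \<in> W) \<and> (\<forall>a. \<forall>x\<in>W. sc a x \<in> W)
     \<and> (\<forall>x\<in>W. \<forall>\<gamma>. hcomp Vg \<gamma> x \<in> W)"

definition fin_dim :: "('g \<Rightarrow> 'v set) \<Rightarrow> ('f::comm_ring_1 \<Rightarrow> 'v::ab_group_add \<Rightarrow> 'v) \<Rightarrow> 'v set \<Rightarrow> bool" where
  "fin_dim Vg sc W \<longleftrightarrow> (\<exists>B. finite B \<and> hbasis Vg sc W B)"

definition gdim :: "('g \<Rightarrow> 'v set) \<Rightarrow> ('f::comm_ring_1 \<Rightarrow> 'v::ab_group_add \<Rightarrow> 'v) \<Rightarrow> 'v set \<Rightarrow> nat" where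
  "gdim Vg sc W = card (SOME B. finite B \<and> hbasis Vg sc W B)"

definition polar :: "('v::ab_group_add \<Rightarrow> 'f::comm_ring_1) \<Rightarrow> 'v \<Rightarrow> 'v \<Rightarrow> 'f" where
  "polar q x y = q (x + y) - q x - q y"

definition bilin_on :: "('f::comm_ring_1 \<Rightarrow> 'v::ab_group_add \<Rightarrow> 'v) \<Rightarrow> 'v set \<Rightarrow> ('v \<Rightarrow> 'v \<Rightarrow> 'f) \<Rightarrow> bool" where
  "bilin_on sc W f \<longleftrightarrow> (\<forall>x\<in>W. \<forall>y\<in>W. \<forall>z\<in>W. \<forall>a.
      f (x + y) z = f x z + f y z \<and> f x (y + z) = f x y + f x z \<and>
      f (sc a x) z = a * f x z \<and> f x (sc a z) = a * f x z)"

definition shifted_on :: "('g::ab_group_add \<Rightarrow> 'f set) \<Rightarrow> ('g \<Rightarrow> 'v set) \<Rightarrow> 'g \<Rightarrow> 'v set \<Rightarrow> ('v \<Rightarrow> 'v \<Rightarrow> 'f) \<Rightarrow> bool" where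
  "shifted_on Fg Vg \<epsilon> W f \<longleftrightarrow> (\<forall>\<gamma> \<delta>. \<forall>x\<in>W \<inter> Vg \<gamma>. \<forall>y\<in>W \<inter> Vg \<delta>. f x y \<in> Fg (\<gamma> + \<delta> + \<epsilon>))"

definition eps_qspace ::
  "('g::ab_group_add \<Rightarrow> 'f::comm_ring_1 set) \<Rightarrow> ('f \<Rightarrow> 'v::ab_group_add \<Rightarrow> 'v) \<Rightarrow> ('g \<Rightarrow> 'v set) \<Rightarrow> 'g
    \<Rightarrow> 'v set \<Rightarrow> ('v \<Rightarrow> 'f) \<Rightarrow> ('v \<Rightarrow> 'v \<Rightarrow> 'f) \<Rightarrow> bool" where
  "eps_qspace Fg sc Vg \<epsilon> W q b \<longleftrightarrow>
     graded_subspace Vg sc W \<and> fin_dim Vg sc W \<and>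
     \<comment> \<open>graded quadratic form\<close>
     (\<forall>a. \<forall>x\<in>W. q (sc a x) = a * a * q x) \<and>
     bilin_on sc W (polar q) \<and> shifted_on Fg Vg 0 W (polar q) \<and>
     (\<forall>\<gamma>. \<forall>x\<in>W \<inter> Vg \<gamma>. q x \<in> Fg (\<gamma> + \<gamma>)) \<and>
     \<comment> \<open>nondegenerate symmetric epsilon-shifted bilinear form\<close>
     bilin_on sc W b \<and> (\<forall>x\<in>W. \<forall>y\<in>W. b x y = b y x) \<and>
     (\<forall>x\<in>W. (\<forall>y\<in>W. b x y = 0) \<longrightarrow> x = 0) \<and>
     shifted_on Fg Vg \<epsilon> W b \<and>
     (\<exists>c. \<forall>x\<in>W. \<forall>y\<in>W. polar q x y = c * b x y)"

datatype 'f qtype = TyI | TyII | TyIII 'f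

definition qtype_ok :: "('g \<Rightarrow> 'f::zero set) \<Rightarrow> 'g \<Rightarrow> 'f qtype \<Rightarrow> bool" where
  "qtype_ok Fg \<epsilon> T \<longleftrightarrow> (case T of TyIII \<tau> \<Rightarrow> \<tau> \<in> Fg \<epsilon> \<and> \<tau> \<noteq> 0 | _ \<Rightarrow> True)"

definition has_type :: "'f::comm_ring_1 qtype \<Rightarrow> 'g::zero \<Rightarrow> 'v::ab_group_add set \<Rightarrow> ('v \<Rightarrow> 'f) \<Rightarrow> ('v \<Rightarrow> 'v \<Rightarrow> 'f) \<Rightarrow> bool" where
  "has_type T \<epsilon> W q b \<longleftrightarrow> (case T of
      TyI \<Rightarrow> (\<epsilon> = 0 \<and> (\<forall>x\<in>W. \<forall>y\<in>W. b x y = polar q x y)) \<or> W = {0}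
    | TyII \<Rightarrow> (\<forall>x\<in>W. \<forall>y\<in>W. q (x + y) = q x + q y) \<and> (\<forall>x\<in>W. b x x = 0)
    | TyIII \<tau> \<Rightarrow> (\<forall>x\<in>W. q x = ginv \<tau> * b x x))"

definition metabolic ::
  "('f::comm_ring_1 \<Rightarrow> 'v::ab_group_add \<Rightarrow> 'v) \<Rightarrow> ('g \<Rightarrow> 'v set) \<Rightarrow> 'v set \<Rightarrow> ('v \<Rightarrow> 'f) \<Rightarrow> ('v \<Rightarrow> 'v \<Rightarrow> 'f) \<Rightarrow> bool" where
  "metabolic sc Vg W q b \<longleftrightarrow> (\<exists>L. graded_subspace Vg sc L \<and> L \<subseteq> W \<and> 2 * gdim Vg sc L = gdim Vg sc W \<and>
      (\<forall>x\<in>L. q x = 0) \<and> (\<forall>x\<in>L. \<forall>y\<in>L. b x y = 0))"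

definition coset :: "('g::ab_group_add \<Rightarrow> 'f::zero set) \<Rightarrow> 'g \<Rightarrow> 'g set" where
  "coset Fg \<gamma> = {\<gamma> + \<delta> | \<delta>. \<delta> \<in> GammaF Fg}"

definition cosets :: "('g::ab_group_add \<Rightarrow> 'f::zero set) \<Rightarrow> 'g set set" where
  "cosets Fg = range (coset Fg)"

definition half_cosets :: "('g::ab_group_add \<Rightarrow> 'f::zero set) \<Rightarrow> 'g set set" where
  "half_cosets Fg = coset Fg ` halfGammaF Fg"

definition cbar :: "'g::ab_group_add \<Rightarrow> 'g set \<Rightarrow> 'g set" where
  "cbar \<epsilon> \<Lambda> = (\<lambda>\<gamma>. - (\<gamma> + \<epsilon>)) ` \<Lambda>"

definition orbits :: "('g::ab_group_add \<Rightarrow> 'f::zero set) \<Rightarrow> 'g \<Rightarrow> 'g set set set" where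
  "orbits Fg \<epsilon> = {{\<Lambda>, cbar \<epsilon> \<Lambda>} | \<Lambda>. \<Lambda> \<in> cosets Fg - half_cosets Fg}"

text \<open>V_Lambda = direct sum of the V_gamma, gamma in Lambda.\<close>
definition Vcos :: "('g \<Rightarrow> 'v::ab_group_add set) \<Rightarrow> 'g set \<Rightarrow> 'v set" where
  "Vcos Vg \<Lambda> = {x. \<forall>\<gamma>. \<gamma> \<notin> \<Lambda> \<longrightarrow> hcomp Vg \<gamma> x = 0}"

definition subsum :: "'i set \<Rightarrow> ('i \<Rightarrow> 'v::comm_monoid_add set) \<Rightarrow> 'v set" where
  "subsum I S = {(\<Sum>i\<in>J. f i) | J f. finite J \<and> J \<subseteq> I \<and> (\<forall>i\<in>J. f i \<in> S i)}"

definition Vorb :: "('g \<Rightarrow> 'v::ab_group_add set) \<Rightarrow> 'g set set \<Rightarrow> 'v set" where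
  "Vorb Vg P = subsum P (Vcos Vg)"

definition orth_decomp :: "('v::ab_group_add \<Rightarrow> 'v \<Rightarrow> 'f::zero) \<Rightarrow> 'v set \<Rightarrow> 'i set \<Rightarrow> ('i \<Rightarrow> 'v set) \<Rightarrow> bool" where
  "orth_decomp b W I S \<longleftrightarrow> (\<forall>i\<in>I. S i \<subseteq> W) \<and>
     (\<forall>w\<in>W. \<exists>!f. (\<forall>i. i \<notin> I \<longrightarrow> f i = 0) \<and> finite {i. f i \<noteq> 0} \<and> (\<forall>i\<in>I. f i \<in> S i) \<and>
                  w = (\<Sum>i\<in>{i. f i \<noteq> 0}. f i)) \<and>
     (\<forall>i\<in>I. \<forall>j\<in>I. i \<noteq> j \<longrightarrow> (\<forall>x\<in>S i. \<forall>y\<in>S j. b x y = 0))"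

end

theory Submission
  imports Defs "HOL-Library.Disjoint_Sets"
begin

text \<open>The form \<open>b\<close> has degree \<open>\<epsilon>\<close>, the polar form of \<open>q\<close> degree \<open>0\<close>, and \<open>F\<close> vanishes in
  degrees outside \<open>\<Gamma>\<^sub>F\<close>; hence \<open>b\<close> pairs \<open>V\<^sub>\<gamma>\<close> with \<open>V\<^sub>\<delta>\<close> only if \<open>\<gamma> + \<delta> + \<epsilon> \<in> \<Gamma>\<^sub>F\<close>,
  i.e. only if \<open>[\<delta>]\<close> is the image of \<open>[\<gamma>]\<close> under the involution \<open>[\<gamma>] \<mapsto> [-(\<gamma> + \<epsilon>)]\<close>.
  Cosets in \<open>\<onehalf>\<Gamma>\<^sub>F/\<Gamma>\<^sub>F\<close> are fixed by the involution, so each pairs only with itself, and so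
  does each orbit \<open>{\<Lambda>, \<Lambda>'}\<close> of the remaining cosets. Splitting \<open>V\<close> along these sets of grades
  gives the orthogonal decompositions, and \<open>b\<close> stays nondegenerate on every summand.

  Choosing one coset from each orbit, the subspace \<open>L\<close> carried by the chosen cosets is totally
  isotropic, since no two of its grades add up to an element of \<open>\<Gamma>\<^sub>F\<close> or of \<open>\<Gamma>\<^sub>F - \<epsilon>\<close>.
  Nondegeneracy makes \<open>b\<close> a perfect pairing between \<open>L\<close> and the part carried by the other cosets,
  so \<open>dim L = dim \<Psi> / 2\<close>; each of the two inequalities comes from bounding an independent family
  by a family of homogeneous functionals without common zero.\<close>

lemma gdecompI:
  assumes "finite S" "\<And>\<gamma>. \<gamma> \<notin> S \<Longrightarrow> c \<gamma> = 0" "\<And>\<gamma>. c \<gamma> \<in> A \<gamma>" "x = (\<Sum>\<gamma>\<in>S. c \<gamma>)"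
  shows "gdecomp A x c"
proof -
  have sub: "{\<gamma>. c \<gamma> \<noteq> 0} \<subseteq> S" using assms(2) by auto
  have "(\<Sum>\<gamma>\<in>S. c \<gamma>) = (\<Sum>\<gamma>\<in>{\<gamma>. c \<gamma> \<noteq> 0}. c \<gamma>)"
    by (rule sum.mono_neutral_right[OF assms(1) sub]) auto
  then show ?thesis using assms finite_subset[OF sub] unfolding gdecomp_def by auto
qed

lemma additive_zero:
  fixes \<phi> :: "'a::monoid_add \<Rightarrow> 'b::ab_group_add"
  assumes "\<And>x y. \<phi> (x + y) = \<phi> x + \<phi> y"
  shows "\<phi> 0 = 0"
  using assms[of 0 0] by simp

lemma additive_sum:
  fixes \<phi> :: "'a::comm_monoid_add \<Rightarrow> 'b::ab_group_add"
  assumes "\<And>x y. \<phi> (x + y) = \<phi> x + \<phi> y"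
  shows "\<phi> (\<Sum>i\<in>I. f i) = (\<Sum>i\<in>I. \<phi> (f i))"
  using sum_comp_morphism[of \<phi>, OF additive_zero[OF assms] assms] by (metis (no_types) comp_apply sum.cong)

context
  fixes A :: "'g \<Rightarrow> 'a::ab_group_add set"
  assumes graded: "is_graded A"
begin

lemma graded_zero: "0 \<in> A \<gamma>"
  using graded unfolding is_graded_def by auto

lemma graded_add: "x \<in> A \<gamma> \<Longrightarrow> y \<in> A \<gamma> \<Longrightarrow> x + y \<in> A \<gamma>"
  using graded unfolding is_graded_def by auto

lemma graded_uminus: "x \<in> A \<gamma> \<Longrightarrow> - x \<in> A \<gamma>"
  using graded unfolding is_graded_def by auto

lemma graded_diff: "x \<in> A \<gamma> \<Longrightarrow> y \<in> A \<gamma> \<Longrightarrow> x - y \<in> A \<gamma>"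
  using graded_add[of x \<gamma> "- y"] graded_uminus[of y] by simp

lemma gdecomp_hcomp: "gdecomp A x (\<lambda>\<gamma>. hcomp A \<gamma> x)"
proof -
  have "\<exists>!c. gdecomp A x c" using graded unfolding is_graded_def by auto
  then show ?thesis unfolding hcomp_def by (rule theI')
qed

lemma hcomp_eq: "gdecomp A x c \<Longrightarrow> hcomp A \<gamma> x = c \<gamma>"
proof -
  assume "gdecomp A x c"
  moreover have "\<exists>!c. gdecomp A x c" using graded unfolding is_graded_def by auto
  ultimately have "(THE c. gdecomp A x c) = c" by (rule the1_equality[rotated])
  then show ?thesis unfolding hcomp_def by simp
qed

lemma hcomp_mem: "hcomp A \<gamma> x \<in> A \<gamma>"
  using gdecomp_hcomp[of x] unfolding gdecomp_def by auto

lemma finite_hcomp_support: "finite {\<gamma>. hcomp A \<gamma> x \<noteq> 0}"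
  using gdecomp_hcomp[of x] unfolding gdecomp_def by auto

lemma sum_hcomp: "x = (\<Sum>\<gamma>\<in>{\<gamma>. hcomp A \<gamma> x \<noteq> 0}. hcomp A \<gamma> x)"
  using gdecomp_hcomp[of x] unfolding gdecomp_def by auto

lemma hcomp_add: "hcomp A \<gamma> (x + y) = hcomp A \<gamma> x + hcomp A \<gamma> y"
proof -
  let ?S = "{\<gamma>. hcomp A \<gamma> x \<noteq> 0} \<union> {\<gamma>. hcomp A \<gamma> y \<noteq> 0}"
  have fin: "finite ?S" using finite_hcomp_support by auto
  have sum: "z = (\<Sum>\<gamma>\<in>?S. hcomp A \<gamma> z)" if "{\<gamma>. hcomp A \<gamma> z \<noteq> 0} \<subseteq> ?S" for z
  proof -
    have "(\<Sum>\<gamma>\<in>?S. hcomp A \<gamma> z) = (\<Sum>\<gamma>\<in>{\<gamma>. hcomp A \<gamma> z \<noteq> 0}. hcomp A \<gamma> z)"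
      by (rule sum.mono_neutral_right[OF fin that]) auto
    then show ?thesis using sum_hcomp[of z] by simp
  qed
  have "gdecomp A (x + y) (\<lambda>\<gamma>. hcomp A \<gamma> x + hcomp A \<gamma> y)"
    by (rule gdecompI[OF fin])
      (use sum[of x] sum[of y] in \<open>auto simp: sum.distrib intro: graded_add hcomp_mem\<close>)
  then show ?thesis by (rule hcomp_eq)
qed

lemma hcomp_zero: "hcomp A \<gamma> 0 = 0"
  using hcomp_add[of \<gamma> 0 0] by simp

lemma hcomp_diff: "hcomp A \<gamma> (x - y) = hcomp A \<gamma> x - hcomp A \<gamma> y"
  using hcomp_add[of \<gamma> "x - y" y] by (simp add: eq_diff_eq)

lemma hcomp_sum: "hcomp A \<gamma> (\<Sum>i\<in>I. f i) = (\<Sum>i\<in>I. hcomp A \<gamma> (f i))"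
  by (rule additive_sum) (rule hcomp_add)

lemma hcomp_homogeneous: "x \<in> A \<delta> \<Longrightarrow> hcomp A \<gamma> x = (if \<gamma> = \<delta> then x else 0)"
  by (rule hcomp_eq, rule gdecompI[of "{\<delta>}"]) (auto simp: graded_zero)

lemma hcomp_ext: "(\<And>\<gamma>. hcomp A \<gamma> x = hcomp A \<gamma> y) \<Longrightarrow> x = y"
  using sum_hcomp[of x] sum_hcomp[of y] by simp

lemma eq_zero_if_hcomp_zero: "(\<And>\<gamma>. hcomp A \<gamma> x = 0) \<Longrightarrow> x = 0"
  using hcomp_ext[of x 0] hcomp_zero by auto

end

lemma hcomp_additive_shift:
  fixes A :: "'g::ab_group_add \<Rightarrow> 'a::ab_group_add set" and C :: "'g \<Rightarrow> 'c::ab_group_add set"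
  assumes "is_graded A" "is_graded C"
    and add: "\<And>x y. \<phi> (x + y) = \<phi> x + \<phi> y"
    and degree: "\<And>\<alpha> u. u \<in> A \<alpha> \<Longrightarrow> \<phi> u \<in> C (\<alpha> + \<delta>)"
  shows "hcomp C \<gamma> (\<phi> u) = \<phi> (hcomp A (\<gamma> - \<delta>) u)"
proof -
  let ?S = "{\<alpha>. hcomp A \<alpha> u \<noteq> 0}"
  have "hcomp C \<gamma> (\<phi> u) = hcomp C \<gamma> (\<Sum>\<alpha>\<in>?S. \<phi> (hcomp A \<alpha> u))"
    using sum_hcomp[OF assms(1), of u] additive_sum[of \<phi>, OF add] by metis
  also have "\<dots> = (\<Sum>\<alpha>\<in>?S. if \<alpha> = \<gamma> - \<delta> then \<phi> (hcomp A \<alpha> u) else 0)"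
    unfolding hcomp_sum[OF assms(2)]
    by (rule sum.cong[OF refl])
      (auto simp: hcomp_homogeneous[OF assms(2) degree[OF hcomp_mem[OF assms(1)]]] algebra_simps)
  also have "\<dots> = \<phi> (hcomp A (\<gamma> - \<delta>) u)"
    using finite_hcomp_support[OF assms(1)] additive_zero[of \<phi>, OF add] by (auto simp: sum.delta)
  finally show ?thesis .
qed

lemma bilin_add_left: "bilin_on sc UNIV f \<Longrightarrow> f (x + y) z = f x z + f y z"
  unfolding bilin_on_def by auto

lemma bilin_add_right: "bilin_on sc UNIV f \<Longrightarrow> f x (y + z) = f x y + f x z"
  unfolding bilin_on_def by auto

lemma bilin_sc_left: "bilin_on sc UNIV f \<Longrightarrow> f (sc a x) z = a * f x z"
  unfolding bilin_on_def by auto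

lemma bilin_sc_right: "bilin_on sc UNIV f \<Longrightarrow> f x (sc a z) = a * f x z"
  unfolding bilin_on_def by auto

lemma bilin_on_subset: "bilin_on sc UNIV f \<Longrightarrow> bilin_on sc W f"
  unfolding bilin_on_def by auto

lemma shifted_on_subset: "shifted_on Fg Vg e UNIV f \<Longrightarrow> shifted_on Fg Vg e W f"
  unfolding shifted_on_def by auto

lemma shifted_onD: "shifted_on Fg Vg e UNIV f \<Longrightarrow> x \<in> Vg \<gamma> \<Longrightarrow> y \<in> Vg \<delta> \<Longrightarrow> f x y \<in> Fg (\<gamma> + \<delta> + e)"
  unfolding shifted_on_def by auto

definition is_decomposition :: "'i set \<Rightarrow> ('i \<Rightarrow> 'v::comm_monoid_add set) \<Rightarrow> 'v \<Rightarrow> ('i \<Rightarrow> 'v) \<Rightarrow> bool" where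
  "is_decomposition I S w f \<longleftrightarrow> (\<forall>i. i \<notin> I \<longrightarrow> f i = 0) \<and> finite {i. f i \<noteq> 0} \<and>
     (\<forall>i\<in>I. f i \<in> S i) \<and> w = (\<Sum>i\<in>{i. f i \<noteq> 0}. f i)"

lemma orth_decompI:
  assumes "\<And>i. i \<in> I \<Longrightarrow> S i \<subseteq> W"
    and "\<And>w. w \<in> W \<Longrightarrow> \<exists>!f. is_decomposition I S w f"
    and "\<And>i j x y. i \<in> I \<Longrightarrow> j \<in> I \<Longrightarrow> i \<noteq> j \<Longrightarrow> x \<in> S i \<Longrightarrow> y \<in> S j \<Longrightarrow> b x y = 0"
  shows "orth_decomp b W I S"
  using assms unfolding orth_decomp_def is_decomposition_def by blast

lemma has_type_subspace: "has_type T \<epsilon> UNIV q b \<Longrightarrow> 0 \<in> W \<Longrightarrow> has_type T \<epsilon> W q b"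
  unfolding has_type_def by (cases T) auto

locale graded_space =
  fixes Fg :: "'g::ab_group_add \<Rightarrow> 'f::comm_ring_1 set"
    and sc :: "'f \<Rightarrow> 'v::ab_group_add \<Rightarrow> 'v"
    and Vg :: "'g \<Rightarrow> 'v set"
  assumes graded_field: "graded_field Fg" and graded_vspace: "graded_vspace Fg sc Vg"
begin

lemma Fg_graded: "is_graded Fg"
  using graded_field unfolding graded_field_def by auto

lemma Vg_graded: "is_graded Vg"
  using graded_vspace unfolding graded_vspace_def by auto

lemma one_Fg: "1 \<in> Fg 0"
  using graded_field unfolding graded_field_def by auto

lemma mult_Fg: "x \<in> Fg \<alpha> \<Longrightarrow> y \<in> Fg \<beta> \<Longrightarrow> x * y \<in> Fg (\<alpha> + \<beta>)"
  using graded_field unfolding graded_field_def by auto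

lemma sc_add_right: "sc a (x + y) = sc a x + sc a y"
  using graded_vspace unfolding graded_vspace_def by auto

lemma sc_add_left: "sc (a + c) x = sc a x + sc c x"
  using graded_vspace unfolding graded_vspace_def by auto

lemma sc_mult: "sc (a * c) x = sc a (sc c x)"
  using graded_vspace unfolding graded_vspace_def by auto

lemma sc_one: "sc 1 x = x"
  using graded_vspace unfolding graded_vspace_def by auto

lemma sc_degree: "a \<in> Fg \<alpha> \<Longrightarrow> x \<in> Vg \<beta> \<Longrightarrow> sc a x \<in> Vg (\<alpha> + \<beta>)"
  using graded_vspace unfolding graded_vspace_def by auto

lemma sc_zero_left: "sc 0 x = 0"
  using additive_zero[of "\<lambda>a. sc a x"] sc_add_left by auto

lemma sc_zero_right: "sc a 0 = 0"
  using additive_zero[of "sc a"] sc_add_right by auto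

lemma sc_minus_left: "sc (- a) x = - sc a x"
  using sc_add_left[of a "- a" x] sc_zero_left by (simp add: eq_neg_iff_add_eq_0 add.commute)

lemma sc_diff_left: "sc (a - c) x = sc a x - sc c x"
  using sc_add_left[of a "- c" x] sc_minus_left by simp

lemma sc_diff_right: "sc a (x - y) = sc a x - sc a y"
  using sc_add_right[of a "x - y" y] by (simp add: eq_diff_eq)

lemma sc_sum_right: "sc a (\<Sum>i\<in>I. f i) = (\<Sum>i\<in>I. sc a (f i))"
  using additive_sum[of "sc a"] sc_add_right by auto

lemma sc_sum_left: "sc (\<Sum>i\<in>I. f i) x = (\<Sum>i\<in>I. sc (f i) x)"
  using additive_sum[of "\<lambda>a. sc a x"] sc_add_left by auto

lemma Fg_eq_zero_outside_GammaF: "\<gamma> \<notin> GammaF Fg \<Longrightarrow> x \<in> Fg \<gamma> \<Longrightarrow> x = 0"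
  unfolding GammaF_def by auto

lemma hcomp_sc: "x \<in> Vg \<delta> \<Longrightarrow> hcomp Vg \<gamma> (sc a x) = sc (hcomp Fg (\<gamma> - \<delta>) a) x"
  by (rule hcomp_additive_shift[OF Fg_graded Vg_graded, of "\<lambda>a. sc a x"])
    (auto simp: sc_add_left sc_degree)

lemma hcomp_mult: "x \<in> Fg \<delta> \<Longrightarrow> hcomp Fg \<gamma> (x * y) = x * hcomp Fg (\<gamma> - \<delta>) y"
  by (rule hcomp_additive_shift[OF Fg_graded Fg_graded, of "\<lambda>y. x * y"])
    (auto simp: distrib_left, metis add.commute mult_Fg)

lemma homogeneous_inverse:
  assumes "x \<in> Fg \<gamma>" "x \<noteq> 0"
  shows "\<exists>y\<in>Fg (- \<gamma>). x * y = 1"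
proof -
  obtain y where y: "x * y = 1"
    using graded_field assms unfolding graded_field_def by blast
  have "x * hcomp Fg (- \<gamma>) y = hcomp Fg 0 (x * y)"
    using hcomp_mult[OF assms(1)] by simp
  also have "\<dots> = 1"
    using y hcomp_homogeneous[OF Fg_graded one_Fg] by simp
  finally show ?thesis using hcomp_mem[OF Fg_graded] by blast
qed

lemma GammaF_zero: "0 \<in> GammaF Fg"
  using one_Fg unfolding GammaF_def by force

lemma GammaF_add: "\<alpha> \<in> GammaF Fg \<Longrightarrow> \<beta> \<in> GammaF Fg \<Longrightarrow> \<alpha> + \<beta> \<in> GammaF Fg"
proof -
  assume "\<alpha> \<in> GammaF Fg" "\<beta> \<in> GammaF Fg"
  then obtain x y where x: "x \<in> Fg \<alpha>" "x \<noteq> 0" and y: "y \<in> Fg \<beta>" "y \<noteq> 0"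
    unfolding GammaF_def by auto
  obtain x' where x': "x * x' = 1" using homogeneous_inverse[OF x] by auto
  have "x * y \<noteq> 0"
    by (metis x' y(2) mult.left_commute mult_1_right mult_zero_right)
  then show ?thesis using mult_Fg[OF x(1) y(1)] unfolding GammaF_def by auto
qed

lemma GammaF_uminus: "\<alpha> \<in> GammaF Fg \<Longrightarrow> - \<alpha> \<in> GammaF Fg"
proof -
  assume "\<alpha> \<in> GammaF Fg"
  then obtain x where x: "x \<in> Fg \<alpha>" "x \<noteq> 0" unfolding GammaF_def by auto
  obtain y where "y \<in> Fg (- \<alpha>)" "x * y = 1" using homogeneous_inverse[OF x] by auto
  then show ?thesis unfolding GammaF_def by force
qed

lemma GammaF_diff: "\<alpha> \<in> GammaF Fg \<Longrightarrow> \<beta> \<in> GammaF Fg \<Longrightarrow> \<alpha> - \<beta> \<in> GammaF Fg"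
  using GammaF_add[of \<alpha> "- \<beta>"] GammaF_uminus by simp

lemma GammaF_add_iff: "\<beta> \<in> GammaF Fg \<Longrightarrow> \<alpha> + \<beta> \<in> GammaF Fg \<longleftrightarrow> \<alpha> \<in> GammaF Fg"
  using GammaF_add GammaF_diff[of "\<alpha> + \<beta>" \<beta>] by auto

lemma GammaF_uminus_iff: "- \<alpha> \<in> GammaF Fg \<longleftrightarrow> \<alpha> \<in> GammaF Fg"
  using GammaF_uminus[of \<alpha>] GammaF_uminus[of "- \<alpha>"] by auto

lemma Vcos_zero: "0 \<in> Vcos Vg G"
  unfolding Vcos_def by (simp add: hcomp_zero[OF Vg_graded])

lemma Vcos_add: "x \<in> Vcos Vg G \<Longrightarrow> y \<in> Vcos Vg G \<Longrightarrow> x + y \<in> Vcos Vg G"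
  unfolding Vcos_def by (simp add: hcomp_add[OF Vg_graded])

lemma Vcos_diff: "x \<in> Vcos Vg G \<Longrightarrow> y \<in> Vcos Vg G \<Longrightarrow> x - y \<in> Vcos Vg G"
  unfolding Vcos_def by (simp add: hcomp_diff[OF Vg_graded])

lemma Vcos_sum: "(\<And>i. i \<in> I \<Longrightarrow> f i \<in> Vcos Vg G) \<Longrightarrow> (\<Sum>i\<in>I. f i) \<in> Vcos Vg G"
  by (induction I rule: infinite_finite_induct) (auto intro: Vcos_zero Vcos_add)

lemma Vcos_homogeneous: "\<gamma> \<in> G \<Longrightarrow> x \<in> Vg \<gamma> \<Longrightarrow> x \<in> Vcos Vg G"
  unfolding Vcos_def by (auto simp: hcomp_homogeneous[OF Vg_graded])

lemma hcomp_Vcos_support: "x \<in> Vcos Vg G \<Longrightarrow> hcomp Vg \<gamma> x \<noteq> 0 \<Longrightarrow> \<gamma> \<in> G"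
  unfolding Vcos_def by auto

lemma hcomp_in_Vcos: "x \<in> Vcos Vg G \<Longrightarrow> hcomp Vg \<gamma> x \<in> Vcos Vg G"
  using Vcos_homogeneous[OF _ hcomp_mem[OF Vg_graded]] hcomp_Vcos_support Vcos_zero by metis

lemma Vcos_disjoint: "G \<inter> H = {} \<Longrightarrow> x \<in> Vcos Vg G \<Longrightarrow> x \<in> Vcos Vg H \<Longrightarrow> x = 0"
  unfolding Vcos_def by (rule eq_zero_if_hcomp_zero[OF Vg_graded]) auto

lemma Vcos_mono: "G \<subseteq> H \<Longrightarrow> Vcos Vg G \<subseteq> Vcos Vg H"
  unfolding Vcos_def by auto

lemma Vcos_UNIV: "Vcos Vg UNIV = UNIV"
  unfolding Vcos_def by auto

lemma homogeneous_in_Vcos_iff: "v \<in> Vg \<delta> \<Longrightarrow> v \<noteq> 0 \<Longrightarrow> v \<in> Vcos Vg G \<longleftrightarrow> \<delta> \<in> G"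
  using hcomp_Vcos_support[of v G \<delta>] Vcos_homogeneous hcomp_homogeneous[OF Vg_graded] by force

definition GammaF_stable :: "'g set \<Rightarrow> bool" where
  "GammaF_stable G \<longleftrightarrow> (\<forall>\<gamma>\<in>G. \<forall>\<delta>\<in>GammaF Fg. \<gamma> + \<delta> \<in> G)"

lemma GammaF_stable_Compl: "GammaF_stable G \<Longrightarrow> GammaF_stable (- G)"
  unfolding GammaF_stable_def by (metis ComplD ComplI GammaF_uminus add_diff_cancel diff_conv_add_uminus)

lemma sc_homogeneous_in_Vcos:
  assumes "GammaF_stable G" "x \<in> Vg \<gamma>" "\<gamma> \<in> G"
  shows "sc a x \<in> Vcos Vg G"
  unfolding Vcos_def
proof (intro CollectI allI impI)
  fix \<gamma>' assume "\<gamma>' \<notin> G"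
  then have "\<gamma>' - \<gamma> \<notin> GammaF Fg"
    using assms(1,3) unfolding GammaF_stable_def by (metis add.commute diff_add_cancel)
  then show "hcomp Vg \<gamma>' (sc a x) = 0"
    using Fg_eq_zero_outside_GammaF[OF _ hcomp_mem[OF Fg_graded]]
    by (simp add: hcomp_sc[OF assms(2)] sc_zero_left)
qed

lemma sc_homogeneous_notin_Vcos:
  assumes "GammaF_stable G" "homogeneous Vg x" "x \<notin> Vcos Vg G"
  shows "sc a x \<in> Vcos Vg (- G)"
proof -
  obtain \<gamma> where \<gamma>: "x \<in> Vg \<gamma>" using assms(2) unfolding homogeneous_def by blast
  then have "\<gamma> \<in> - G" using assms(3) Vcos_homogeneous by blast
  then show ?thesis by (rule sc_homogeneous_in_Vcos[OF GammaF_stable_Compl[OF assms(1)] \<gamma>])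
qed

lemma sc_in_Vcos:
  assumes "GammaF_stable G" "x \<in> Vcos Vg G"
  shows "sc a x \<in> Vcos Vg G"
proof -
  have "sc a x = (\<Sum>\<gamma>\<in>{\<gamma>. hcomp Vg \<gamma> x \<noteq> 0}. sc a (hcomp Vg \<gamma> x))"
    using sum_hcomp[OF Vg_graded, of x] sc_sum_right by metis
  also have "\<dots> \<in> Vcos Vg G"
    using assms hcomp_Vcos_support
    by (intro Vcos_sum sc_homogeneous_in_Vcos[OF assms(1) hcomp_mem[OF Vg_graded]]) blast
  finally show ?thesis .
qed

lemma Vcos_graded_subspace: "GammaF_stable G \<Longrightarrow> graded_subspace Vg sc (Vcos Vg G)"
  unfolding graded_subspace_def using Vcos_zero Vcos_add sc_in_Vcos hcomp_in_Vcos by blast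

definition proj :: "'g set \<Rightarrow> 'v \<Rightarrow> 'v" where
  "proj G x = (\<Sum>\<gamma>\<in>{\<gamma>. hcomp Vg \<gamma> x \<noteq> 0} \<inter> G. hcomp Vg \<gamma> x)"

lemma hcomp_proj: "hcomp Vg \<delta> (proj G x) = (if \<delta> \<in> G then hcomp Vg \<delta> x else 0)"
proof -
  let ?S = "{\<gamma>. hcomp Vg \<gamma> x \<noteq> 0} \<inter> G"
  have "hcomp Vg \<delta> (proj G x) = (\<Sum>\<gamma>\<in>?S. if \<delta> = \<gamma> then hcomp Vg \<gamma> x else 0)"
    unfolding proj_def hcomp_sum[OF Vg_graded]
    by (rule sum.cong) (auto simp: hcomp_homogeneous[OF Vg_graded hcomp_mem[OF Vg_graded]])
  also have "\<dots> = (if \<delta> \<in> G then hcomp Vg \<delta> x else 0)"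
    using finite_hcomp_support[OF Vg_graded] by (auto simp: sum.delta)
  finally show ?thesis .
qed

lemma proj_in_Vcos: "proj G x \<in> Vcos Vg G"
  unfolding Vcos_def by (auto simp: hcomp_proj)

lemma diff_proj_in_Vcos: "x - proj G x \<in> Vcos Vg (- G)"
  unfolding Vcos_def by (auto simp: hcomp_proj hcomp_diff[OF Vg_graded])

subsection \<open>Homogeneous bases and dimension\<close>

lemma lin_span_finite_iff:
  assumes "finite B"
  shows "x \<in> lin_span sc B \<longleftrightarrow> (\<exists>a. x = (\<Sum>v\<in>B. sc (a v) v))"
proof
  assume "x \<in> lin_span sc B"
  then obtain S a where S: "finite S" "S \<subseteq> B" "x = (\<Sum>v\<in>S. sc (a v) v)"
    unfolding lin_span_def by auto
  have "(\<Sum>v\<in>B. sc (if v \<in> S then a v else 0) v) = (\<Sum>v\<in>S. sc (if v \<in> S then a v else 0) v)"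
    by (rule sum.mono_neutral_right[OF assms S(2)]) (auto simp: sc_zero_left)
  then show "\<exists>a. x = (\<Sum>v\<in>B. sc (a v) v)"
    using S(3) by (intro exI[of _ "\<lambda>v. if v \<in> S then a v else 0"]) simp
next
  assume "\<exists>a. x = (\<Sum>v\<in>B. sc (a v) v)"
  then show "x \<in> lin_span sc B" using assms unfolding lin_span_def by blast
qed

lemma lin_indep_finite_iff:
  assumes "finite B"
  shows "lin_indep sc B \<longleftrightarrow> (\<forall>a. (\<Sum>v\<in>B. sc (a v) v) = 0 \<longrightarrow> (\<forall>v\<in>B. a v = 0))"
proof
  assume "lin_indep sc B"
  then show "\<forall>a. (\<Sum>v\<in>B. sc (a v) v) = 0 \<longrightarrow> (\<forall>v\<in>B. a v = 0)"
    using assms unfolding lin_indep_def by blast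
next
  assume indep: "\<forall>a. (\<Sum>v\<in>B. sc (a v) v) = 0 \<longrightarrow> (\<forall>v\<in>B. a v = 0)"
  show "lin_indep sc B" unfolding lin_indep_def
  proof (intro allI impI ballI)
    fix S a v assume S: "finite S \<and> S \<subseteq> B \<and> (\<Sum>v\<in>S. sc (a v) v) = 0" and v: "v \<in> S"
    let ?a = "\<lambda>v. if v \<in> S then a v else 0"
    have "(\<Sum>v\<in>B. sc (?a v) v) = (\<Sum>v\<in>S. sc (?a v) v)"
      by (rule sum.mono_neutral_right[OF assms]) (use S in \<open>auto simp: sc_zero_left\<close>)
    also have "\<dots> = 0" using S by simp
    finally have "\<forall>v\<in>B. ?a v = 0" using indep[rule_format, of ?a] by blast
    moreover have "v \<in> B" using v S by auto
    ultimately show "a v = 0" using v by force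
  qed
qed

lemma lin_indep_coeffs_eq:
  assumes "finite B" "lin_indep sc B" "(\<Sum>v\<in>B. sc (a v) v) = (\<Sum>v\<in>B. sc (c v) v)" "v \<in> B"
  shows "a v = c v"
proof -
  have "(\<Sum>v\<in>B. sc (a v - c v) v) = 0"
    using assms(3) by (simp add: sc_diff_left sum_subtractf)
  then have "\<forall>v\<in>B. a v - c v = 0"
    using lin_indep_finite_iff[OF assms(1), THEN iffD1, OF assms(2), rule_format, of "\<lambda>v. a v - c v"]
    by blast
  then show ?thesis using assms(4) by simp
qed

lemma zero_notin_lin_indep: "lin_indep sc B \<Longrightarrow> 0 \<notin> B"
proof
  assume indep: "lin_indep sc B" and "0 \<in> B"
  then have "finite {0} \<and> {0} \<subseteq> B \<and> (\<Sum>v\<in>{0}. sc ((\<lambda>_. 1::'f) v) v) = 0"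
    by (simp add: sc_zero_right)
  then have "\<forall>v\<in>{0}. (\<lambda>_. 1::'f) v = 0"
    using indep[unfolded lin_indep_def, rule_format, of "{0}" "\<lambda>_. 1"] by blast
  then show False by simp
qed

lemma lin_indep_subset: "lin_indep sc B \<Longrightarrow> C \<subseteq> B \<Longrightarrow> lin_indep sc C"
  unfolding lin_indep_def by blast

lemma shear_coeffs_eq_zero:
  assumes "finite D" "lin_indep sc D" "d0 \<in> D"
    and sum: "(\<Sum>d\<in>D - {d0}. sc (a d) (d - sc (c d) d0)) = 0" and d: "d \<in> D - {d0}"
  shows "a d = 0"
proof -
  define s where "s = (\<Sum>d\<in>D - {d0}. a d * c d)"
  define a' where "a' v = (if v = d0 then - s else a v)" for v
  have "(\<Sum>d\<in>D - {d0}. sc (a d) d) - sc s d0 = 0"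
    using sum unfolding s_def by (simp add: sc_diff_right sc_mult sum_subtractf sc_sum_left)
  moreover have "(\<Sum>v\<in>D. sc (a' v) v) = sc (a' d0) d0 + (\<Sum>v\<in>D - {d0}. sc (a v) v)"
    using assms(1,3) by (simp add: sum.remove a'_def)
  ultimately have "(\<Sum>v\<in>D. sc (a' v) v) = 0"
    by (simp add: a'_def sc_minus_left)
  then have "a' d = 0" using assms(2) lin_indep_finite_iff[OF assms(1)] d by blast
  then show ?thesis using d by (simp add: a'_def)
qed

lemma shear_lin_indep:
  fixes c :: "'v \<Rightarrow> 'f"
  assumes "finite D" "lin_indep sc D" "d0 \<in> D"
  defines "\<phi> \<equiv> \<lambda>d. d - sc (c d) d0"
  shows "inj_on \<phi> (D - {d0})" and "lin_indep sc (\<phi> ` (D - {d0}))"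
proof -
  have coeffs: "a d = 0" if "(\<Sum>d\<in>D - {d0}. sc (a d) (\<phi> d)) = 0" "d \<in> D - {d0}" for a d
    using shear_coeffs_eq_zero[OF assms(1-3) that(1)[unfolded \<phi>_def] that(2)] .
  show inj: "inj_on \<phi> (D - {d0})"
  proof (rule inj_onI, rule ccontr)
    fix d d' assume dd: "d \<in> D - {d0}" "d' \<in> D - {d0}" "\<phi> d = \<phi> d'" "d \<noteq> d'"
    let ?a = "\<lambda>v. if v = d then 1 else if v = d' then - 1 else (0::'f)"
    have "(\<Sum>v\<in>D - {d0}. sc (?a v) (\<phi> v)) = (\<Sum>v\<in>{d, d'}. sc (?a v) (\<phi> v))"
      by (rule sum.mono_neutral_right) (use assms(1) dd in \<open>auto simp: sc_zero_left\<close>)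
    also have "\<dots> = 0" using dd by (simp add: sc_one sc_minus_left)
    finally show False using coeffs[of ?a d] dd by simp
  qed
  show "lin_indep sc (\<phi> ` (D - {d0}))"
    unfolding lin_indep_finite_iff[OF finite_imageI[OF finite_Diff[OF assms(1)]]]
    using coeffs[of "\<lambda>d. _ (\<phi> d)"] by (simp add: sum.reindex[OF inj])
qed

definition sc_subspace :: "'v set \<Rightarrow> bool" where
  "sc_subspace W \<longleftrightarrow> 0 \<in> W \<and> (\<forall>x\<in>W. \<forall>y\<in>W. x + y \<in> W) \<and> (\<forall>a. \<forall>x\<in>W. sc a x \<in> W)"

definition homogeneous_functional :: "'v set \<Rightarrow> ('v \<Rightarrow> 'f) \<Rightarrow> bool" where
  "homogeneous_functional W f \<longleftrightarrow>
     (\<forall>x\<in>W. \<forall>y\<in>W. f (x + y) = f x + f y) \<and> (\<forall>a. \<forall>x\<in>W. f (sc a x) = a * f x) \<and>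
     (\<exists>\<eta>. \<forall>\<gamma>. \<forall>x\<in>W \<inter> Vg \<gamma>. f x \<in> Fg (\<gamma> + \<eta>))"

definition homogeneous_indep :: "'v set \<Rightarrow> 'v set \<Rightarrow> bool" where
  "homogeneous_indep W D \<longleftrightarrow> finite D \<and> D \<subseteq> W \<and> lin_indep sc D \<and> (\<forall>d\<in>D. homogeneous Vg d)"

lemma sc_subspace_diff_sc:
  "sc_subspace W \<Longrightarrow> x \<in> W \<Longrightarrow> y \<in> W \<Longrightarrow> x - sc c y \<in> W"
  unfolding sc_subspace_def by (metis diff_conv_add_uminus sc_minus_left sc_mult)

lemma homogeneous_functional_diff_sc:
  assumes "sc_subspace W" "homogeneous_functional W f" "x \<in> W" "y \<in> W"
  shows "f (x - sc c y) = f x - c * f y"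
proof -
  have add: "f (u + v) = f u + f v" if "u \<in> W" "v \<in> W" for u v
    using assms(2) that unfolding homogeneous_functional_def by blast
  have "x - sc c y \<in> W" "sc c y \<in> W"
    using assms(1,3,4) sc_subspace_diff_sc unfolding sc_subspace_def by auto
  then have "f x = f (x - sc c y) + f (sc c y)" using add by (metis diff_add_cancel)
  then show ?thesis using assms(2,4) unfolding homogeneous_functional_def by auto
qed

lemma homogeneous_diff_sc:
  assumes "d \<in> Vg \<delta>" "d0 \<in> Vg \<delta>0" "c \<in> Fg (\<delta> - \<delta>0)"
  shows "homogeneous Vg (d - sc c d0)"
proof -
  have "sc c d0 \<in> Vg \<delta>" using sc_degree[OF assms(3,2)] by simp
  then show ?thesis using graded_diff[OF Vg_graded assms(1)] unfolding homogeneous_def by blast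
qed

text \<open>Shear the family along some \<open>d\<^sub>0\<close> with \<open>f d\<^sub>0 \<noteq> 0\<close> so that it lands in \<open>ker f\<close>;
  only \<open>d\<^sub>0\<close> is lost.\<close>

lemma exists_homogeneous_indep_in_kernel:
  assumes W: "sc_subspace W" and D: "homogeneous_indep W D" and f: "homogeneous_functional W f"
  shows "\<exists>D'. homogeneous_indep W D' \<and> card D \<le> card D' + 1 \<and> (\<forall>x\<in>D'. f x = 0) \<and>
     (\<forall>g. homogeneous_functional W g \<longrightarrow> (\<forall>d\<in>D. g d = 0) \<longrightarrow> (\<forall>x\<in>D'. g x = 0))"
proof (cases "\<forall>d\<in>D. f d = 0")
  case True
  then show ?thesis using D by (intro exI[of _ D]) auto
next
  case False
  then obtain d0 where d0: "d0 \<in> D" "f d0 \<noteq> 0" by auto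
  have Dh: "finite D" "D \<subseteq> W" "lin_indep sc D" "\<And>d. d \<in> D \<Longrightarrow> \<exists>\<delta>. d \<in> Vg \<delta>"
    using D unfolding homogeneous_indep_def homogeneous_def by auto
  obtain \<delta>0 where \<delta>0: "d0 \<in> Vg \<delta>0" using Dh(4) d0(1) by blast
  obtain \<eta> where \<eta>: "\<And>\<gamma> x. x \<in> W \<Longrightarrow> x \<in> Vg \<gamma> \<Longrightarrow> f x \<in> Fg (\<gamma> + \<eta>)"
    using f unfolding homogeneous_functional_def by blast
  obtain i where i: "i \<in> Fg (- (\<delta>0 + \<eta>))" "f d0 * i = 1"
    using homogeneous_inverse[OF \<eta>[OF _ \<delta>0] d0(2)] d0(1) Dh(2) by blast
  define \<phi> where "\<phi> d = d - sc (f d * i) d0" for d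
  define D' where "D' = \<phi> ` (D - {d0})"
  have shear: "inj_on \<phi> (D - {d0})" "lin_indep sc D'"
    using shear_lin_indep[OF Dh(1,3) d0(1), of "\<lambda>d. f d * i"] unfolding \<phi>_def D'_def by auto
  have homog: "homogeneous Vg (\<phi> d)" if d: "d \<in> D" for d
  proof -
    obtain \<delta> where \<delta>: "d \<in> Vg \<delta>" using Dh(4) d by blast
    have "\<delta> + \<eta> + - (\<delta>0 + \<eta>) = \<delta> - \<delta>0" by (simp add: algebra_simps)
    then have "f d * i \<in> Fg (\<delta> - \<delta>0)" using mult_Fg[OF \<eta>[OF _ \<delta>] i(1)] Dh(2) d by auto
    then show ?thesis unfolding \<phi>_def by (rule homogeneous_diff_sc[OF \<delta> \<delta>0])
  qed
  have \<phi>_eval: "g (\<phi> d) = g d - f d * i * g d0" if "homogeneous_functional W g" "d \<in> D" for g d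
    using homogeneous_functional_diff_sc[OF W that(1)] Dh(2) that(2) d0(1) unfolding \<phi>_def by blast
  have "D' \<subseteq> W"
    unfolding D'_def \<phi>_def using Dh(2) d0(1) sc_subspace_diff_sc[OF W] by blast
  then have "homogeneous_indep W D'"
    unfolding homogeneous_indep_def using Dh(1) shear(2) homog unfolding D'_def by blast
  moreover have "card D \<le> card D' + 1"
    using card_image[OF shear(1)] Dh(1) d0(1) unfolding D'_def by simp
  moreover have "\<forall>x\<in>D'. f x = 0"
    using \<phi>_eval[OF f] i(2) unfolding D'_def by (simp add: mult.assoc mult.commute[of i])
  moreover have "\<forall>g. homogeneous_functional W g \<longrightarrow> (\<forall>d\<in>D. g d = 0) \<longrightarrow> (\<forall>x\<in>D'. g x = 0)"
    using \<phi>_eval d0(1) unfolding D'_def by fastforce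
  ultimately show ?thesis by blast
qed

lemma exists_homogeneous_indep_in_common_kernel:
  assumes W: "sc_subspace W" and Fs: "finite Fs" "\<forall>f\<in>Fs. homogeneous_functional W f"
    and D: "homogeneous_indep W D"
  shows "\<exists>D'. homogeneous_indep W D' \<and> card D \<le> card D' + card Fs \<and> (\<forall>f\<in>Fs. \<forall>x\<in>D'. f x = 0)"
  using Fs
proof (induction Fs rule: finite_induct)
  case empty
  then show ?case using D by auto
next
  case (insert f Fs)
  obtain D1 where D1: "homogeneous_indep W D1" "card D \<le> card D1 + card Fs"
    "\<forall>g\<in>Fs. \<forall>x\<in>D1. g x = 0"
    using insert by auto
  have "homogeneous_functional W f" using insert.prems by simp
  then obtain D2 where D2: "homogeneous_indep W D2" "card D1 \<le> card D2 + 1" "\<forall>x\<in>D2. f x = 0"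
    "\<forall>g. homogeneous_functional W g \<longrightarrow> (\<forall>d\<in>D1. g d = 0) \<longrightarrow> (\<forall>x\<in>D2. g x = 0)"
    using exists_homogeneous_indep_in_kernel[OF W D1(1)] by blast
  show ?case
    using D1 D2 insert.hyps insert.prems by (intro exI[of _ D2]) auto
qed

lemma card_indep_le_card_functionals:
  assumes W: "sc_subspace W" and Fs: "finite Fs" "\<forall>f\<in>Fs. homogeneous_functional W f"
    and D: "homogeneous_indep W D"
    and no_common_zero: "\<And>x. x \<in> W \<Longrightarrow> (\<forall>f\<in>Fs. f x = 0) \<Longrightarrow> x = 0"
  shows "card D \<le> card Fs"
proof -
  obtain D' where D': "homogeneous_indep W D'" "card D \<le> card D' + card Fs"
    "\<forall>f\<in>Fs. \<forall>x\<in>D'. f x = 0"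
    using exists_homogeneous_indep_in_common_kernel[OF W Fs D] by blast
  have "D' \<subseteq> {0}"
    using D'(1,3) no_common_zero unfolding homogeneous_indep_def by blast
  then have "D' = {}"
    using zero_notin_lin_indep D'(1) unfolding homogeneous_indep_def by blast
  then show ?thesis using D'(2) by simp
qed

definition coord :: "'v set \<Rightarrow> 'v \<Rightarrow> 'v \<Rightarrow> 'f" where
  "coord E e x = (SOME a. x = (\<Sum>v\<in>E. sc (a v) v)) e"

lemma sum_coord: "finite E \<Longrightarrow> x \<in> lin_span sc E \<Longrightarrow> x = (\<Sum>v\<in>E. sc (coord E v x) v)"
  unfolding coord_def using someI_ex[of "\<lambda>a. x = (\<Sum>v\<in>E. sc (a v) v)"] lin_span_finite_iff by blast

lemma coord_eq:
  assumes "finite E" "lin_indep sc E" "x = (\<Sum>v\<in>E. sc (a v) v)" "e \<in> E"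
  shows "coord E e x = a e"
proof (rule lin_indep_coeffs_eq[OF assms(1,2) _ assms(4)])
  have "x \<in> lin_span sc E" unfolding lin_span_finite_iff[OF assms(1)] using assms(3) by blast
  then show "(\<Sum>v\<in>E. sc (coord E v x) v) = (\<Sum>v\<in>E. sc (a v) v)"
    using sum_coord[OF assms(1)] assms(3) by simp
qed

lemma lin_span_sc_subspace:
  assumes "finite E"
  shows "sc_subspace (lin_span sc E)"
  unfolding sc_subspace_def
proof (intro conjI ballI allI)
  show "0 \<in> lin_span sc E"
    unfolding lin_span_finite_iff[OF assms] by (intro exI[of _ "\<lambda>_. 0"]) (simp add: sc_zero_left)
next
  fix x y assume "x \<in> lin_span sc E" "y \<in> lin_span sc E"
  then obtain a c where "x = (\<Sum>v\<in>E. sc (a v) v)" "y = (\<Sum>v\<in>E. sc (c v) v)"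
    unfolding lin_span_finite_iff[OF assms] by blast
  then have "x + y = (\<Sum>v\<in>E. sc (a v + c v) v)" by (simp add: sc_add_left sum.distrib)
  then show "x + y \<in> lin_span sc E"
    unfolding lin_span_finite_iff[OF assms] by (intro exI[of _ "\<lambda>v. a v + c v"])
next
  fix k x assume "x \<in> lin_span sc E"
  then obtain a where "x = (\<Sum>v\<in>E. sc (a v) v)" unfolding lin_span_finite_iff[OF assms] by blast
  then have "sc k x = (\<Sum>v\<in>E. sc (k * a v) v)" by (simp add: sc_sum_right sc_mult)
  then show "sc k x \<in> lin_span sc E"
    unfolding lin_span_finite_iff[OF assms] by (intro exI[of _ "\<lambda>v. k * a v"])
qed

lemma coord_homogeneous_functional:
  assumes E: "finite E" "lin_indep sc E" "\<forall>v\<in>E. homogeneous Vg v" and e: "e \<in> E"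
  shows "homogeneous_functional (lin_span sc E) (coord E e)"
  unfolding homogeneous_functional_def
proof (intro conjI ballI allI)
  fix x y assume "x \<in> lin_span sc E" "y \<in> lin_span sc E"
  then have "x + y = (\<Sum>v\<in>E. sc (coord E v x + coord E v y) v)"
    using sum_coord[OF E(1)] by (simp add: sc_add_left sum.distrib)
  then show "coord E e (x + y) = coord E e x + coord E e y"
    by (rule coord_eq[OF E(1,2) _ e])
next
  fix k x assume "x \<in> lin_span sc E"
  then have "sc k x = sc k (\<Sum>v\<in>E. sc (coord E v x) v)"
    using sum_coord[OF E(1)] by simp
  also have "\<dots> = (\<Sum>v\<in>E. sc (k * coord E v x) v)"
    by (simp add: sc_sum_right sc_mult)
  finally have "sc k x = (\<Sum>v\<in>E. sc (k * coord E v x) v)" .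
  then show "coord E e (sc k x) = k * coord E e x"
    by (rule coord_eq[OF E(1,2) _ e])
next
  obtain deg where deg: "\<And>v. v \<in> E \<Longrightarrow> v \<in> Vg (deg v)"
    using E(3) unfolding homogeneous_def by metis
  show "\<exists>\<eta>. \<forall>\<gamma>. \<forall>x\<in>lin_span sc E \<inter> Vg \<gamma>. coord E e x \<in> Fg (\<gamma> + \<eta>)"
  proof (intro exI allI ballI)
    fix \<gamma> x assume x: "x \<in> lin_span sc E \<inter> Vg \<gamma>"
    have "x = hcomp Vg \<gamma> x" using x hcomp_homogeneous[OF Vg_graded, of x \<gamma> \<gamma>] by simp
    also have "\<dots> = hcomp Vg \<gamma> (\<Sum>v\<in>E. sc (coord E v x) v)"
      using sum_coord[OF E(1), of x] x by simp
    also have "\<dots> = (\<Sum>v\<in>E. hcomp Vg \<gamma> (sc (coord E v x) v))"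
      by (rule hcomp_sum[OF Vg_graded])
    also have "\<dots> = (\<Sum>v\<in>E. sc (hcomp Fg (\<gamma> - deg v) (coord E v x)) v)"
      by (rule sum.cong[OF refl]) (rule hcomp_sc[OF deg])
    finally have "coord E e x = hcomp Fg (\<gamma> - deg e) (coord E e x)"
      by (rule coord_eq[OF E(1,2) _ e])
    then show "coord E e x \<in> Fg (\<gamma> + - deg e)"
      using hcomp_mem[OF Fg_graded] by (metis diff_conv_add_uminus)
  qed
qed

lemma card_hbasis_le:
  assumes D: "finite D" "hbasis Vg sc W D" and E: "finite E" "hbasis Vg sc W E"
  shows "card D \<le> card E"
proof -
  have WE: "W = lin_span sc E" and Eh: "lin_indep sc E" "\<forall>v\<in>E. homogeneous Vg v"
    using E(2) unfolding hbasis_def by auto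
  let ?Fs = "(\<lambda>e. coord E e) ` E"
  have "card D \<le> card ?Fs"
  proof (rule card_indep_le_card_functionals)
    show "sc_subspace W" using lin_span_sc_subspace[OF E(1)] WE by simp
    show "finite ?Fs" "\<forall>f\<in>?Fs. homogeneous_functional W f"
      using E(1) coord_homogeneous_functional[OF E(1) Eh] WE by auto
    show "homogeneous_indep W D"
      using D unfolding hbasis_def homogeneous_indep_def by auto
  next
    fix x assume "x \<in> W" "\<forall>f\<in>?Fs. f x = 0"
    then show "x = 0" using sum_coord[OF E(1), of x] WE by (simp add: sc_zero_left)
  qed
  then show ?thesis using card_image_le[OF E(1), of "\<lambda>e. coord E e"] by simp
qed

lemma gdim_eq:
  assumes "finite B" "hbasis Vg sc W B"
  shows "gdim Vg sc W = card B"
proof -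
  let ?B = "SOME B. finite B \<and> hbasis Vg sc W B"
  have "finite ?B \<and> hbasis Vg sc W ?B"
    by (rule someI[of _ B]) (use assms in blast)
  then have "card ?B = card B"
    using card_hbasis_le assms by (meson antisym)
  then show ?thesis unfolding gdim_def .
qed

lemma hbasis_Vcos:
  assumes st: "GammaF_stable G" and B: "finite B" "hbasis Vg sc UNIV B"
  shows "hbasis Vg sc (Vcos Vg G) {v\<in>B. v \<in> Vcos Vg G}"
proof -
  let ?BG = "{v\<in>B. v \<in> Vcos Vg G}"
  have fin: "finite ?BG" using B(1) by auto
  have Bi: "lin_indep sc B" "\<forall>v\<in>B. homogeneous Vg v" "lin_span sc B = UNIV"
    using B(2) unfolding hbasis_def by auto
  have sum_BG: "(\<Sum>v\<in>?BG. sc (a v) v) \<in> Vcos Vg G" for a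
    by (rule Vcos_sum) (simp add: sc_in_Vcos[OF st])
  have "x \<in> lin_span sc ?BG" if x: "x \<in> Vcos Vg G" for x
  proof -
    have "x \<in> lin_span sc B" using Bi(3) by simp
    then obtain a where "x = (\<Sum>v\<in>B. sc (a v) v)"
      unfolding lin_span_finite_iff[OF B(1)] by blast
    then have xa: "x = (\<Sum>v\<in>?BG. sc (a v) v) + (\<Sum>v\<in>B - ?BG. sc (a v) v)"
      using sum.subset_diff[OF _ B(1), of ?BG] by (simp add: add.commute)
    have "(\<Sum>v\<in>B - ?BG. sc (a v) v) \<in> Vcos Vg (- G)"
      using Bi(2) by (intro Vcos_sum sc_homogeneous_notin_Vcos[OF st]) auto
    moreover have "x - (\<Sum>v\<in>?BG. sc (a v) v) = (\<Sum>v\<in>B - ?BG. sc (a v) v)"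
      using xa by simp
    then have "(\<Sum>v\<in>B - ?BG. sc (a v) v) \<in> Vcos Vg G"
      using Vcos_diff[OF x sum_BG[of a]] by simp
    ultimately have "(\<Sum>v\<in>B - ?BG. sc (a v) v) = 0"
      using Vcos_disjoint[of "- G" G] by blast
    then show ?thesis
      unfolding lin_span_finite_iff[OF fin] using xa by (intro exI[of _ a]) simp
  qed
  moreover have "lin_span sc ?BG \<subseteq> Vcos Vg G"
  proof
    fix y assume "y \<in> lin_span sc ?BG"
    then obtain a where "y = (\<Sum>v\<in>?BG. sc (a v) v)"
      unfolding lin_span_finite_iff[OF fin] by blast
    then show "y \<in> Vcos Vg G" using sum_BG by simp
  qed
  ultimately show ?thesis
    unfolding hbasis_def using Bi lin_indep_subset[OF Bi(1)] by auto
qed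

subsection \<open>Splitting along disjoint sets of grades\<close>

text \<open>Components of degrees \<open>\<gamma>\<close> and \<open>\<delta>\<close> pair into \<open>F\<^bsub>\<gamma>+\<delta>+e\<^esub>\<close>, which is \<open>0\<close> outside \<open>\<Gamma>\<^sub>F\<close>.\<close>

lemma shifted_form_Vcos_eq_zero:
  assumes bil: "bilin_on sc UNIV f" and sh: "shifted_on Fg Vg e UNIV f"
    and x: "x \<in> Vcos Vg G" and y: "y \<in> Vcos Vg H"
    and GH: "\<And>\<gamma> \<delta>. \<gamma> \<in> G \<Longrightarrow> \<delta> \<in> H \<Longrightarrow> \<gamma> + \<delta> + e \<notin> GammaF Fg"
  shows "f x y = 0"
proof -
  let ?Sx = "{\<gamma>. hcomp Vg \<gamma> x \<noteq> 0}" and ?Sy = "{\<gamma>. hcomp Vg \<gamma> y \<noteq> 0}"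
  have "f x y = f (\<Sum>\<gamma>\<in>?Sx. hcomp Vg \<gamma> x) (\<Sum>\<delta>\<in>?Sy. hcomp Vg \<delta> y)"
    using sum_hcomp[OF Vg_graded] by metis
  also have "\<dots> = (\<Sum>\<gamma>\<in>?Sx. f (hcomp Vg \<gamma> x) (\<Sum>\<delta>\<in>?Sy. hcomp Vg \<delta> y))"
    by (rule additive_sum[of "\<lambda>u. f u _"]) (rule bilin_add_left[OF bil])
  also have "\<dots> = (\<Sum>\<gamma>\<in>?Sx. \<Sum>\<delta>\<in>?Sy. f (hcomp Vg \<gamma> x) (hcomp Vg \<delta> y))"
    by (rule sum.cong[OF refl], rule additive_sum[of "f _"], rule bilin_add_right[OF bil])
  also have "\<dots> = 0"
  proof (intro sum.neutral ballI)
    fix \<gamma> \<delta> assume "\<gamma> \<in> ?Sx" "\<delta> \<in> ?Sy"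
    then have "\<gamma> + \<delta> + e \<notin> GammaF Fg" using GH hcomp_Vcos_support x y by blast
    then show "f (hcomp Vg \<gamma> x) (hcomp Vg \<delta> y) = 0"
      using Fg_eq_zero_outside_GammaF shifted_onD[OF sh hcomp_mem[OF Vg_graded] hcomp_mem[OF Vg_graded]]
      by blast
  qed
  finally show ?thesis .
qed

lemma proj_add: "proj G (x + y) = proj G x + proj G y"
  by (rule hcomp_ext[OF Vg_graded]) (simp add: hcomp_proj hcomp_add[OF Vg_graded])

lemma proj_Vcos: "x \<in> Vcos Vg G \<Longrightarrow> proj G x = x"
  by (rule hcomp_ext[OF Vg_graded]) (auto simp: hcomp_proj dest: hcomp_Vcos_support)

lemma proj_Vcos_disjoint: "G \<inter> H = {} \<Longrightarrow> x \<in> Vcos Vg H \<Longrightarrow> proj G x = 0"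
  by (rule eq_zero_if_hcomp_zero[OF Vg_graded]) (auto simp: hcomp_proj dest: hcomp_Vcos_support)

lemma finite_proj_support:
  assumes disj: "disjoint_family_on g I"
  shows "finite {i\<in>I. proj (g i) w \<noteq> 0}"
proof -
  let ?Sw = "{\<gamma>. hcomp Vg \<gamma> w \<noteq> 0}"
  have "{i\<in>I. proj (g i) w \<noteq> 0} \<subseteq> (\<Union>\<gamma>\<in>?Sw. {i\<in>I. \<gamma> \<in> g i})"
    using eq_zero_if_hcomp_zero[OF Vg_graded] hcomp_proj by (smt (verit) UN_iff mem_Collect_eq subsetI)
  moreover have "finite {i\<in>I. \<gamma> \<in> g i}" for \<gamma>
  proof (cases "\<exists>i\<in>I. \<gamma> \<in> g i")
    case True
    then obtain i where "i \<in> I" "\<gamma> \<in> g i" by blast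
    then have "{i\<in>I. \<gamma> \<in> g i} \<subseteq> {i}" using disj unfolding disjoint_family_on_def by blast
    then show ?thesis using finite_subset by blast
  next
    case False
    then have "{i\<in>I. \<gamma> \<in> g i} = {}" by blast
    then show ?thesis by (metis finite.emptyI)
  qed
  ultimately show ?thesis
    using finite_hcomp_support[OF Vg_graded] by (meson finite_UN_I finite_subset)
qed

lemma sum_proj:
  assumes disj: "disjoint_family_on g I"
    and w: "w \<in> Vcos Vg (\<Union>i\<in>I. g i)"
  shows "w = (\<Sum>i\<in>{i\<in>I. proj (g i) w \<noteq> 0}. proj (g i) w)"
proof (rule hcomp_ext[OF Vg_graded])
  fix \<delta>
  let ?J = "{i\<in>I. proj (g i) w \<noteq> 0}"
  have "hcomp Vg \<delta> (\<Sum>i\<in>?J. proj (g i) w) = (\<Sum>i\<in>?J. if \<delta> \<in> g i then hcomp Vg \<delta> w else 0)"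
    by (simp add: hcomp_sum[OF Vg_graded] hcomp_proj)
  also have "\<dots> = hcomp Vg \<delta> w"
  proof (cases "hcomp Vg \<delta> w = 0")
    case True
    then show ?thesis by (simp add: sum.neutral)
  next
    case False
    then obtain i0 where i0: "i0 \<in> I" "\<delta> \<in> g i0" using w hcomp_Vcos_support by blast
    then have "hcomp Vg \<delta> (proj (g i0) w) \<noteq> 0" using False by (simp add: hcomp_proj)
    then have "i0 \<in> ?J" using i0(1) hcomp_zero[OF Vg_graded] by auto
    have "(\<Sum>i\<in>?J. if \<delta> \<in> g i then hcomp Vg \<delta> w else 0) = (\<Sum>i\<in>?J. if i = i0 then hcomp Vg \<delta> w else 0)"
      using disj i0 unfolding disjoint_family_on_def by (intro sum.cong) auto
    also have "\<dots> = hcomp Vg \<delta> w"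
      using finite_proj_support[OF disj] \<open>i0 \<in> ?J\<close> by (simp add: sum.delta)
    finally show ?thesis .
  qed
  finally show "hcomp Vg \<delta> w = hcomp Vg \<delta> (\<Sum>i\<in>?J. proj (g i) w)" by simp
qed

lemma proj_decomposition:
  assumes disj: "disjoint_family_on g I"
    and w: "w \<in> Vcos Vg (\<Union>i\<in>I. g i)"
  shows "is_decomposition I (\<lambda>i. Vcos Vg (g i)) w (\<lambda>i. if i \<in> I then proj (g i) w else 0)"
proof -
  have "{i. (if i \<in> I then proj (g i) w else 0) \<noteq> 0} = {i\<in>I. proj (g i) w \<noteq> 0}" by auto
  then show ?thesis
    unfolding is_decomposition_def
    using finite_proj_support[OF disj] sum_proj[OF disj w] proj_in_Vcos by auto
qed

lemma decomposition_eq_proj: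
  assumes disj: "disjoint_family_on g I"
    and h: "is_decomposition I (\<lambda>i. Vcos Vg (g i)) w h"
  shows "h = (\<lambda>i. if i \<in> I then proj (g i) w else 0)"
proof
  fix i
  have h_def: "\<forall>i. i \<notin> I \<longrightarrow> h i = 0" "finite {i. h i \<noteq> 0}" "\<forall>i\<in>I. h i \<in> Vcos Vg (g i)"
    "w = (\<Sum>j\<in>{i. h i \<noteq> 0}. h j)"
    using h unfolding is_decomposition_def by auto
  show "h i = (if i \<in> I then proj (g i) w else 0)"
  proof (cases "i \<in> I")
    case True
    have "proj (g i) w = (\<Sum>j\<in>{i. h i \<noteq> 0}. proj (g i) (h j))"
      using h_def(4) additive_sum[of "proj (g i)", OF proj_add] by metis
    also have "\<dots> = (\<Sum>j\<in>{i. h i \<noteq> 0}. if j = i then h i else 0)"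
    proof (rule sum.cong[OF refl])
      fix j assume "j \<in> {i. h i \<noteq> 0}"
      then have j: "j \<in> I" using h_def(1) by auto
      show "proj (g i) (h j) = (if j = i then h i else 0)"
        using proj_Vcos[OF bspec[OF h_def(3) j]]
          proj_Vcos_disjoint[OF disjoint_family_onD[OF disj True j] bspec[OF h_def(3) j]]
        by auto
    qed
    also have "\<dots> = h i" using h_def(2) by (simp add: sum.delta)
    finally show ?thesis using True by simp
  qed (use h_def in simp)
qed

lemma subsum_Vcos:
  assumes disj: "disjoint_family_on g I"
    and S: "\<And>i. i \<in> I \<Longrightarrow> S i = Vcos Vg (g i)"
  shows "subsum I S = Vcos Vg (\<Union>i\<in>I. g i)"
proof
  show "subsum I S \<subseteq> Vcos Vg (\<Union>i\<in>I. g i)"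
  proof
    fix w assume "w \<in> subsum I S"
    then obtain J h where J: "J \<subseteq> I" "\<forall>i\<in>J. h i \<in> S i" "w = (\<Sum>i\<in>J. h i)"
      unfolding subsum_def by blast
    have "h i \<in> Vcos Vg (\<Union>i\<in>I. g i)" if "i \<in> J" for i
    proof -
      have "i \<in> I" using J(1) that by blast
      then have "h i \<in> Vcos Vg (g i)" "Vcos Vg (g i) \<subseteq> Vcos Vg (\<Union>i\<in>I. g i)"
        using J(2) S that Vcos_mono[of "g i" "\<Union>i\<in>I. g i"] by auto
      then show ?thesis by blast
    qed
    then show "w \<in> Vcos Vg (\<Union>i\<in>I. g i)" unfolding J(3) by (rule Vcos_sum)
  qed
  show "Vcos Vg (\<Union>i\<in>I. g i) \<subseteq> subsum I S"
  proof
    fix w assume w: "w \<in> Vcos Vg (\<Union>i\<in>I. g i)"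
    let ?J = "{i\<in>I. proj (g i) w \<noteq> 0}"
    have "finite ?J \<and> ?J \<subseteq> I \<and> (\<forall>i\<in>?J. proj (g i) w \<in> S i)"
      using finite_proj_support[OF disj] S proj_in_Vcos by auto
    then show "w \<in> subsum I S"
      unfolding subsum_def using sum_proj[OF disj w] by blast
  qed
qed

lemma orth_decomp_Vcos:
  assumes disj: "disjoint_family_on g I"
    and S: "\<And>i. i \<in> I \<Longrightarrow> S i = Vcos Vg (g i)"
    and bil: "bilin_on sc UNIV f" and sh: "shifted_on Fg Vg e UNIV f"
    and orth: "\<And>i j \<gamma> \<delta>. i \<in> I \<Longrightarrow> j \<in> I \<Longrightarrow> i \<noteq> j \<Longrightarrow> \<gamma> \<in> g i \<Longrightarrow> \<delta> \<in> g j \<Longrightarrow>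
                 \<gamma> + \<delta> + e \<notin> GammaF Fg"
  shows "orth_decomp f (Vcos Vg (\<Union>i\<in>I. g i)) I S"
proof (rule orth_decompI)
  fix i assume "i \<in> I"
  then have "g i \<subseteq> (\<Union>i\<in>I. g i)" by blast
  then show "S i \<subseteq> Vcos Vg (\<Union>i\<in>I. g i)" using S[OF \<open>i \<in> I\<close>] Vcos_mono by simp
next
  fix w assume w: "w \<in> Vcos Vg (\<Union>i\<in>I. g i)"
  have eq: "is_decomposition I S w = is_decomposition I (\<lambda>i. Vcos Vg (g i)) w"
    using S unfolding is_decomposition_def by (intro ext) auto
  show "\<exists>!h. is_decomposition I S w h"
  proof (rule ex1I)
    show "is_decomposition I S w (\<lambda>i. if i \<in> I then proj (g i) w else 0)"
      unfolding eq by (rule proj_decomposition[OF disj w])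
  next
    fix h assume "is_decomposition I S w h"
    then show "h = (\<lambda>i. if i \<in> I then proj (g i) w else 0)"
      unfolding eq by (rule decomposition_eq_proj[OF disj])
  qed
next
  fix i j x y assume "i \<in> I" "j \<in> I" "i \<noteq> j" "x \<in> S i" "y \<in> S j"
  then show "f x y = 0"
    using shifted_form_Vcos_eq_zero[OF bil sh] S orth by metis
qed

lemma mem_coset_iff: "\<delta> \<in> coset Fg \<gamma> \<longleftrightarrow> \<delta> - \<gamma> \<in> GammaF Fg"
proof
  assume "\<delta> \<in> coset Fg \<gamma>"
  then obtain d where "\<delta> = \<gamma> + d" "d \<in> GammaF Fg" unfolding coset_def by blast
  then show "\<delta> - \<gamma> \<in> GammaF Fg" by simp
next
  assume "\<delta> - \<gamma> \<in> GammaF Fg"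
  moreover have "\<delta> = \<gamma> + (\<delta> - \<gamma>)" by simp
  ultimately show "\<delta> \<in> coset Fg \<gamma>" unfolding coset_def by blast
qed

lemma coset_self: "\<gamma> \<in> coset Fg \<gamma>"
  using mem_coset_iff GammaF_zero by simp

lemma coset_eq_iff: "coset Fg \<gamma> = coset Fg \<gamma>' \<longleftrightarrow> \<gamma> - \<gamma>' \<in> GammaF Fg"
proof
  assume "coset Fg \<gamma> = coset Fg \<gamma>'"
  then show "\<gamma> - \<gamma>' \<in> GammaF Fg" using coset_self[of \<gamma>] mem_coset_iff by auto
next
  assume d: "\<gamma> - \<gamma>' \<in> GammaF Fg"
  show "coset Fg \<gamma> = coset Fg \<gamma>'"
  proof (rule set_eqI)
    fix \<delta>
    have "\<delta> - \<gamma>' = (\<delta> - \<gamma>) + (\<gamma> - \<gamma>')" by simp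
    then show "\<delta> \<in> coset Fg \<gamma> \<longleftrightarrow> \<delta> \<in> coset Fg \<gamma>'"
      unfolding mem_coset_iff using GammaF_add_iff[OF d, of "\<delta> - \<gamma>"] by simp
  qed
qed

lemma coset_disjoint: "coset Fg \<gamma> \<noteq> coset Fg \<gamma>' \<Longrightarrow> coset Fg \<gamma> \<inter> coset Fg \<gamma>' = {}"
proof (rule ccontr)
  assume ne: "coset Fg \<gamma> \<noteq> coset Fg \<gamma>'" and "coset Fg \<gamma> \<inter> coset Fg \<gamma>' \<noteq> {}"
  then obtain \<xi> where "\<xi> - \<gamma> \<in> GammaF Fg" "\<xi> - \<gamma>' \<in> GammaF Fg"
    unfolding mem_coset_iff[symmetric] by blast
  then have "(\<xi> - \<gamma>') - (\<xi> - \<gamma>) \<in> GammaF Fg" by (rule GammaF_diff[rotated])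
  then show False using ne coset_eq_iff by simp
qed

lemma disjoint_family_on_cosets: "A \<subseteq> cosets Fg \<Longrightarrow> disjoint_family_on (\<lambda>\<Lambda>. \<Lambda>) A"
  unfolding disjoint_family_on_def cosets_def using coset_disjoint by blast

lemma GammaF_stable_coset: "GammaF_stable (coset Fg \<gamma>)"
  unfolding GammaF_stable_def
proof (intro ballI)
  fix \<gamma>' \<delta> assume "\<gamma>' \<in> coset Fg \<gamma>" "\<delta> \<in> GammaF Fg"
  then have "(\<gamma>' - \<gamma>) + \<delta> \<in> GammaF Fg" using GammaF_add mem_coset_iff by blast
  moreover have "(\<gamma>' - \<gamma>) + \<delta> = (\<gamma>' + \<delta>) - \<gamma>" by (simp add: algebra_simps)
  ultimately show "\<gamma>' + \<delta> \<in> coset Fg \<gamma>" unfolding mem_coset_iff by simp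
qed

lemma halfGammaF_diff_iff:
  assumes "\<delta> - \<gamma> \<in> GammaF Fg"
  shows "\<gamma> \<in> halfGammaF Fg \<longleftrightarrow> \<delta> \<in> halfGammaF Fg"
proof -
  have "\<delta> + \<delta> = (\<gamma> + \<gamma>) + ((\<delta> - \<gamma>) + (\<delta> - \<gamma>))" by (simp add: algebra_simps)
  then show ?thesis
    unfolding halfGammaF_def mem_Collect_eq
    using GammaF_add_iff[OF GammaF_add[OF assms assms], of "\<gamma> + \<gamma>"] by simp
qed

lemma GammaF_stable_halfGammaF: "GammaF_stable (halfGammaF Fg)"
  unfolding GammaF_stable_def
proof (intro ballI)
  fix \<gamma> \<delta> assume "\<gamma> \<in> halfGammaF Fg" "\<delta> \<in> GammaF Fg"
  moreover have "(\<gamma> + \<delta>) - \<gamma> = \<delta>" by simp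
  ultimately show "\<gamma> + \<delta> \<in> halfGammaF Fg" using halfGammaF_diff_iff[of "\<gamma> + \<delta>" \<gamma>] by simp
qed

lemma Union_half_cosets: "\<Union> (half_cosets Fg) = halfGammaF Fg"
  unfolding half_cosets_def using halfGammaF_diff_iff coset_self by (auto simp: mem_coset_iff)

end

locale shifted_qspace = graded_space Fg sc Vg
  for Fg :: "'g::ab_group_add \<Rightarrow> 'f::comm_ring_1 set"
    and sc :: "'f \<Rightarrow> 'v::ab_group_add \<Rightarrow> 'v"
    and Vg :: "'g \<Rightarrow> 'v set" +
  fixes \<epsilon> :: 'g and q :: "'v \<Rightarrow> 'f" and b :: "'v \<Rightarrow> 'v \<Rightarrow> 'f"
  assumes eps_GammaF: "\<epsilon> \<in> GammaF Fg" and qspace: "eps_qspace Fg sc Vg \<epsilon> UNIV q b"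
begin

lemma b_bilin: "bilin_on sc UNIV b"
  using qspace unfolding eps_qspace_def by auto

lemma polar_bilin: "bilin_on sc UNIV (polar q)"
  using qspace unfolding eps_qspace_def by auto

lemma b_shifted: "shifted_on Fg Vg \<epsilon> UNIV b"
  using qspace unfolding eps_qspace_def by auto

lemma polar_shifted: "shifted_on Fg Vg 0 UNIV (polar q)"
  using qspace unfolding eps_qspace_def by auto

lemma b_nondegenerate: "(\<And>y. b x y = 0) \<Longrightarrow> x = 0"
  using qspace unfolding eps_qspace_def by auto

lemma q_sc: "q (sc a x) = a * a * q x"
  using qspace unfolding eps_qspace_def by auto

lemma q_degree: "x \<in> Vg \<gamma> \<Longrightarrow> q x \<in> Fg (\<gamma> + \<gamma>)"
  using qspace unfolding eps_qspace_def by auto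

lemma finite_hbasis: "\<exists>B. finite B \<and> hbasis Vg sc UNIV B"
  using qspace unfolding eps_qspace_def fin_dim_def by auto

lemma q_zero: "q 0 = 0"
  using q_sc[of 0 0] sc_zero_left[of 0] by simp

definition pairs_only_with :: "'g set \<Rightarrow> 'g set \<Rightarrow> bool" where
  "pairs_only_with G G' \<longleftrightarrow> (\<forall>\<gamma>\<in>G. \<forall>\<delta>. \<gamma> + \<delta> + \<epsilon> \<in> GammaF Fg \<longrightarrow> \<delta> \<in> G')"

lemma pairs_only_with_orthogonal:
  "pairs_only_with G G' \<Longrightarrow> x \<in> Vcos Vg G \<Longrightarrow> y \<in> Vcos Vg (- G') \<Longrightarrow> b x y = 0"
  by (rule shifted_form_Vcos_eq_zero[OF b_bilin b_shifted]) (auto simp: pairs_only_with_def)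

lemma Vcos_eq_zero_if_orthogonal:
  assumes "pairs_only_with G G'" "x \<in> Vcos Vg G" "\<And>y. y \<in> Vcos Vg G' \<Longrightarrow> b x y = 0"
  shows "x = 0"
proof (rule b_nondegenerate)
  fix y
  have "b x y = b x (proj G' y) + b x (y - proj G' y)"
    using bilin_add_right[OF b_bilin, of x "proj G' y" "y - proj G' y"] by simp
  then show "b x y = 0"
    using assms pairs_only_with_orthogonal[OF assms(1,2) diff_proj_in_Vcos] proj_in_Vcos by simp
qed

lemma b_homogeneous_functional: "homogeneous Vg e \<Longrightarrow> homogeneous_functional W (\<lambda>x. b x e)"
proof -
  assume "homogeneous Vg e"
  then obtain \<delta> where "e \<in> Vg \<delta>" unfolding homogeneous_def by auto
  then have "\<forall>\<gamma>. \<forall>x\<in>W \<inter> Vg \<gamma>. b x e \<in> Fg (\<gamma> + (\<delta> + \<epsilon>))"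
    using shifted_onD[OF b_shifted] by (simp add: add.assoc)
  then show ?thesis
    unfolding homogeneous_functional_def using bilin_add_left[OF b_bilin] bilin_sc_left[OF b_bilin]
    by blast
qed

text \<open>The functionals \<open>b(-, e)\<close>, \<open>e\<close> running through a basis of \<open>V\<^sub>G'\<close>, have no common zero in
  \<open>V\<^sub>G\<close> but \<open>0\<close>.\<close>

lemma card_hbasis_le_if_pairs_only_with:
  assumes st: "GammaF_stable G" and pairs: "pairs_only_with G G'"
    and D: "finite D" "hbasis Vg sc (Vcos Vg G) D" and E: "finite E" "hbasis Vg sc (Vcos Vg G') E"
  shows "card D \<le> card E"
proof -
  let ?Fs = "(\<lambda>e x. b x e) ` E"
  have Eh: "\<forall>v\<in>E. homogeneous Vg v" "lin_span sc E = Vcos Vg G'"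
    using E(2) unfolding hbasis_def by auto
  have "card D \<le> card ?Fs"
  proof (rule card_indep_le_card_functionals)
    show "sc_subspace (Vcos Vg G)"
      unfolding sc_subspace_def using Vcos_zero Vcos_add sc_in_Vcos[OF st] by blast
    show "finite ?Fs" "\<forall>f\<in>?Fs. homogeneous_functional (Vcos Vg G) f"
      using E(1) Eh(1) b_homogeneous_functional by auto
    show "homogeneous_indep (Vcos Vg G) D"
      using D unfolding hbasis_def homogeneous_indep_def by auto
  next
    fix x assume x: "x \<in> Vcos Vg G" and zero: "\<forall>f\<in>?Fs. f x = 0"
    show "x = 0"
    proof (rule Vcos_eq_zero_if_orthogonal[OF pairs x])
      fix y assume "y \<in> Vcos Vg G'"
      then obtain a where y: "y = (\<Sum>v\<in>E. sc (a v) v)"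
        using Eh(2) lin_span_finite_iff[OF E(1)] by blast
      have "b x y = (\<Sum>v\<in>E. b x (sc (a v) v))"
        unfolding y by (rule additive_sum) (rule bilin_add_right[OF b_bilin])
      also have "\<dots> = 0" using zero by (simp add: bilin_sc_right[OF b_bilin])
      finally show "b x y = 0" .
    qed
  qed
  then show ?thesis using card_image_le[OF E(1), of "\<lambda>e x. b x e"] by simp
qed

lemma q_Vcos_eq_zero:
  assumes G: "\<And>\<gamma> \<delta>. \<gamma> \<in> G \<Longrightarrow> \<delta> \<in> G \<Longrightarrow> \<gamma> + \<delta> \<notin> GammaF Fg" and x: "x \<in> Vcos Vg G"
  shows "q x = 0"
proof -
  have "q (\<Sum>\<gamma>\<in>S. u \<gamma>) = 0" if "finite S" "\<forall>\<gamma>\<in>S. u \<gamma> \<in> Vg \<gamma> \<and> \<gamma> \<in> G" for S u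
    using that
  proof (induction S rule: finite_induct)
    case empty
    then show ?case by (simp add: q_zero)
  next
    case (insert \<gamma> S)
    let ?r = "\<Sum>\<gamma>\<in>S. u \<gamma>"
    have u: "u \<gamma> \<in> Vg \<gamma>" "\<gamma> \<in> G" using insert by auto
    have "q (u \<gamma>) = 0"
      using Fg_eq_zero_outside_GammaF[OF G[OF u(2) u(2)] q_degree[OF u(1)]] .
    moreover have "polar q (u \<gamma>) ?r = 0"
    proof (rule shifted_form_Vcos_eq_zero[OF polar_bilin polar_shifted])
      show "u \<gamma> \<in> Vcos Vg G" by (rule Vcos_homogeneous[OF u(2,1)])
      show "?r \<in> Vcos Vg G" using insert by (intro Vcos_sum) (auto intro: Vcos_homogeneous)
    qed (use G in auto)
    ultimately show ?case using insert unfolding polar_def by (simp add: algebra_simps)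
  qed
  then show ?thesis
    using sum_hcomp[OF Vg_graded, of x] finite_hcomp_support[OF Vg_graded] x
      hcomp_Vcos_support hcomp_mem[OF Vg_graded] by (metis (mono_tags, lifting) mem_Collect_eq)
qed

lemma eps_qspace_Vcos:
  assumes st: "GammaF_stable G" and pairs: "pairs_only_with G G"
  shows "eps_qspace Fg sc Vg \<epsilon> (Vcos Vg G) q b"
proof -
  obtain B where B: "finite B" "hbasis Vg sc UNIV B" using finite_hbasis by auto
  have "fin_dim Vg sc (Vcos Vg G)"
    unfolding fin_dim_def using hbasis_Vcos[OF st B] B(1) by (intro exI[of _ "{v\<in>B. v \<in> Vcos Vg G}"]) simp
  moreover have "\<forall>x\<in>Vcos Vg G. (\<forall>y\<in>Vcos Vg G. b x y = 0) \<longrightarrow> x = 0"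
    using Vcos_eq_zero_if_orthogonal[OF pairs] by blast
  ultimately show ?thesis
    using qspace Vcos_graded_subspace[OF st] unfolding eps_qspace_def
    by (auto intro: bilin_on_subset shifted_on_subset)
qed

lemma diff_bar: "\<delta> - (- \<gamma> - \<epsilon>) = \<gamma> + \<delta> + \<epsilon>"
  by (simp add: algebra_simps)

lemma cbar_coset: "cbar \<epsilon> (coset Fg \<gamma>) = coset Fg (- \<gamma> - \<epsilon>)"
proof -
  have "x \<in> cbar \<epsilon> (coset Fg \<gamma>) \<longleftrightarrow> - x - \<epsilon> \<in> coset Fg \<gamma>" for x
  proof -
    have "x = - ((- x - \<epsilon>) + \<epsilon>)" by simp
    then show ?thesis unfolding cbar_def by (auto simp: image_iff intro!: bexI[of _ "- x - \<epsilon>"])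
  qed
  moreover have "- x - \<epsilon> - \<gamma> = - (x - (- \<gamma> - \<epsilon>))" for x by (simp add: algebra_simps)
  ultimately show ?thesis
    unfolding set_eq_iff mem_coset_iff using GammaF_uminus_iff by presburger
qed

lemma halfGammaF_pair_iff:
  assumes "\<gamma> + \<delta> + \<epsilon> \<in> GammaF Fg"
  shows "\<gamma> \<in> halfGammaF Fg \<longleftrightarrow> \<delta> \<in> halfGammaF Fg"
proof -
  let ?Z = "(\<gamma> + \<delta> + \<epsilon>) + (\<gamma> + \<delta> + \<epsilon>) - (\<epsilon> + \<epsilon>)"
  have eq: "\<delta> + \<delta> = - (\<gamma> + \<gamma>) + ?Z" by (simp add: algebra_simps)
  have "?Z \<in> GammaF Fg" using GammaF_add GammaF_diff assms eps_GammaF by blast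
  then have "\<delta> + \<delta> \<in> GammaF Fg \<longleftrightarrow> - (\<gamma> + \<gamma>) \<in> GammaF Fg"
    unfolding eq by (rule GammaF_add_iff)
  then show ?thesis
    unfolding halfGammaF_def mem_Collect_eq GammaF_uminus_iff by (rule sym)
qed

lemma diff_in_GammaF_if_half_pair:
  assumes "\<gamma> \<in> halfGammaF Fg" "\<gamma> + \<delta> + \<epsilon> \<in> GammaF Fg"
  shows "\<delta> - \<gamma> \<in> GammaF Fg"
proof -
  have "(\<gamma> + \<delta> + \<epsilon>) - (\<gamma> + \<gamma>) \<in> GammaF Fg"
    using assms GammaF_diff unfolding halfGammaF_def by blast
  then have "((\<gamma> + \<delta> + \<epsilon>) - (\<gamma> + \<gamma>)) - \<epsilon> \<in> GammaF Fg"
    using GammaF_diff eps_GammaF by blast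
  moreover have "((\<gamma> + \<delta> + \<epsilon>) - (\<gamma> + \<gamma>)) - \<epsilon> = \<delta> - \<gamma>" by (simp add: algebra_simps)
  ultimately show ?thesis by simp
qed

lemma bar_diff_notin_GammaF:
  assumes "\<gamma> \<notin> halfGammaF Fg"
  shows "\<gamma> - (- \<gamma> - \<epsilon>) \<notin> GammaF Fg"
proof
  assume "\<gamma> - (- \<gamma> - \<epsilon>) \<in> GammaF Fg"
  then have "(\<gamma> - (- \<gamma> - \<epsilon>)) - \<epsilon> \<in> GammaF Fg" using GammaF_diff eps_GammaF by blast
  moreover have "(\<gamma> - (- \<gamma> - \<epsilon>)) - \<epsilon> = \<gamma> + \<gamma>" by (simp add: algebra_simps)
  ultimately show False using assms unfolding halfGammaF_def by simp
qed

lemma pairs_only_with_not_halfGammaF: "pairs_only_with (- halfGammaF Fg) (- halfGammaF Fg)"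
  unfolding pairs_only_with_def using halfGammaF_pair_iff by blast

lemma pairs_only_with_half_coset:
  assumes "\<Lambda> \<in> half_cosets Fg"
  shows "pairs_only_with \<Lambda> \<Lambda>"
proof -
  obtain h where h: "h \<in> halfGammaF Fg" "\<Lambda> = coset Fg h"
    using assms unfolding half_cosets_def by blast
  have "\<delta> - h \<in> GammaF Fg" if "\<gamma> - h \<in> GammaF Fg" "\<gamma> + \<delta> + \<epsilon> \<in> GammaF Fg" for \<gamma> \<delta>
  proof -
    have "\<gamma> \<in> halfGammaF Fg" using h(1) halfGammaF_diff_iff that(1) by blast
    then have "\<delta> - \<gamma> \<in> GammaF Fg" using diff_in_GammaF_if_half_pair that(2) by blast
    from GammaF_add[OF this that(1)] show ?thesis by simp
  qed
  then show ?thesis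
    unfolding pairs_only_with_def h(2) by (simp add: mem_coset_iff)
qed

lemma orth_decomp_half_cosets:
  "subsum (half_cosets Fg) (Vcos Vg) = Vcos Vg (halfGammaF Fg)"
  "orth_decomp b (Vcos Vg (halfGammaF Fg)) (half_cosets Fg) (Vcos Vg)"
proof -
  have disj: "disjoint_family_on (\<lambda>\<Lambda>. \<Lambda>) (half_cosets Fg)"
    by (rule disjoint_family_on_cosets) (auto simp: half_cosets_def cosets_def)
  show "subsum (half_cosets Fg) (Vcos Vg) = Vcos Vg (halfGammaF Fg)"
    using subsum_Vcos[OF disj] Union_half_cosets by simp
  have "\<gamma> + \<delta> + \<epsilon> \<notin> GammaF Fg"
    if "\<Lambda> \<in> half_cosets Fg" "\<Lambda>' \<in> half_cosets Fg" "\<Lambda> \<noteq> \<Lambda>'" "\<gamma> \<in> \<Lambda>" "\<delta> \<in> \<Lambda>'" for \<Lambda> \<Lambda>' \<gamma> \<delta>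
    using pairs_only_with_half_coset[OF that(1)] disjoint_family_onD[OF disj that(1-3)] that(4,5)
    unfolding pairs_only_with_def by blast
  then show "orth_decomp b (Vcos Vg (halfGammaF Fg)) (half_cosets Fg) (Vcos Vg)"
    using orth_decomp_Vcos[OF disj _ b_bilin b_shifted] Union_half_cosets by simp
qed

subsection \<open>The orbits of the involution\<close>

definition orbit :: "'g \<Rightarrow> 'g set set" where
  "orbit \<gamma> = {coset Fg \<gamma>, coset Fg (- \<gamma> - \<epsilon>)}"

lemma orbit_in_orbits: "\<gamma> \<notin> halfGammaF Fg \<Longrightarrow> orbit \<gamma> \<in> orbits Fg \<epsilon>"
proof -
  assume "\<gamma> \<notin> halfGammaF Fg"
  then have "coset Fg \<gamma> \<notin> half_cosets Fg"
    unfolding half_cosets_def using coset_eq_iff halfGammaF_diff_iff by fastforce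
  then show ?thesis
    unfolding orbits_def cosets_def orbit_def using cbar_coset by auto
qed

lemma orbitsE:
  assumes "P \<in> orbits Fg \<epsilon>"
  obtains \<gamma> where "\<gamma> \<notin> halfGammaF Fg" "P = orbit \<gamma>"
proof -
  obtain \<gamma> where P: "P = {coset Fg \<gamma>, cbar \<epsilon> (coset Fg \<gamma>)}" "coset Fg \<gamma> \<notin> half_cosets Fg"
    using assms unfolding orbits_def cosets_def by auto
  then have "\<gamma> \<notin> halfGammaF Fg" unfolding half_cosets_def by blast
  then show ?thesis using that P(1) cbar_coset orbit_def by auto
qed

lemma orbit_eq_if_diff: "\<delta> - \<gamma> \<in> GammaF Fg \<Longrightarrow> orbit \<delta> = orbit \<gamma>"
proof -
  assume d: "\<delta> - \<gamma> \<in> GammaF Fg"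
  have "(- \<delta> - \<epsilon>) - (- \<gamma> - \<epsilon>) = - (\<delta> - \<gamma>)" by (simp add: algebra_simps)
  then have "coset Fg (- \<delta> - \<epsilon>) = coset Fg (- \<gamma> - \<epsilon>)"
    using coset_eq_iff GammaF_uminus[OF d] by simp
  moreover have "coset Fg \<delta> = coset Fg \<gamma>" using coset_eq_iff d by blast
  ultimately show ?thesis unfolding orbit_def by simp
qed

lemma orbit_eq_if_pair: "\<gamma> + \<delta> + \<epsilon> \<in> GammaF Fg \<Longrightarrow> orbit \<delta> = orbit \<gamma>"
proof -
  assume d: "\<gamma> + \<delta> + \<epsilon> \<in> GammaF Fg"
  have e: "(- \<delta> - \<epsilon>) - \<gamma> = - (\<gamma> + \<delta> + \<epsilon>)" by (simp add: algebra_simps)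
  have "coset Fg \<delta> = coset Fg (- \<gamma> - \<epsilon>)" unfolding coset_eq_iff diff_bar by (rule d)
  moreover have "coset Fg (- \<delta> - \<epsilon>) = coset Fg \<gamma>" unfolding coset_eq_iff e by (rule GammaF_uminus[OF d])
  ultimately show ?thesis unfolding orbit_def by auto
qed

lemma orbit_eq_if_mem: "\<xi> \<in> \<Union> (orbit \<gamma>) \<Longrightarrow> orbit \<xi> = orbit \<gamma>"
proof -
  assume "\<xi> \<in> \<Union> (orbit \<gamma>)"
  then have "\<xi> \<in> coset Fg \<gamma> \<or> \<xi> \<in> coset Fg (- \<gamma> - \<epsilon>)" unfolding orbit_def by blast
  then have "\<xi> - \<gamma> \<in> GammaF Fg \<or> \<gamma> + \<xi> + \<epsilon> \<in> GammaF Fg"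
    unfolding mem_coset_iff diff_bar .
  then show ?thesis using orbit_eq_if_diff orbit_eq_if_pair by blast
qed

lemma Union_orbit_subset: "\<gamma> \<notin> halfGammaF Fg \<Longrightarrow> \<Union> (orbit \<gamma>) \<subseteq> - halfGammaF Fg"
proof
  fix \<xi> assume "\<gamma> \<notin> halfGammaF Fg" "\<xi> \<in> \<Union> (orbit \<gamma>)"
  moreover have "\<xi> - \<gamma> \<in> GammaF Fg \<or> \<gamma> + \<xi> + \<epsilon> \<in> GammaF Fg"
    using calculation(2) orbit_eq_if_mem orbit_def
    unfolding mem_coset_iff[symmetric] diff_bar[symmetric] by blast
  ultimately show "\<xi> \<in> - halfGammaF Fg"
    using halfGammaF_diff_iff halfGammaF_pair_iff by blast
qed

lemma Union_orbits: "(\<Union>P\<in>orbits Fg \<epsilon>. \<Union>P) = - halfGammaF Fg"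
proof
  show "(\<Union>P\<in>orbits Fg \<epsilon>. \<Union>P) \<subseteq> - halfGammaF Fg"
    using Union_orbit_subset by (blast elim: orbitsE)
  show "- halfGammaF Fg \<subseteq> (\<Union>P\<in>orbits Fg \<epsilon>. \<Union>P)"
    using orbit_in_orbits coset_self unfolding orbit_def by blast
qed

lemma Vorb_eq: "P \<in> orbits Fg \<epsilon> \<Longrightarrow> Vorb Vg P = Vcos Vg (\<Union>P)"
  unfolding Vorb_def
  by (rule subsum_Vcos[of "\<lambda>\<Lambda>. \<Lambda>", simplified], rule disjoint_family_on_cosets)
    (auto elim!: orbitsE simp: orbit_def cosets_def)

lemma orth_decomp_orbits:
  "subsum (orbits Fg \<epsilon>) (Vorb Vg) = Vcos Vg (- halfGammaF Fg)"
  "orth_decomp b (Vcos Vg (- halfGammaF Fg)) (orbits Fg \<epsilon>) (Vorb Vg)"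
proof -
  have disj: "disjoint_family_on (\<lambda>P. \<Union>P) (orbits Fg \<epsilon>)"
    unfolding disjoint_family_on_def
  proof (intro ballI impI)
    fix P P' assume P: "P \<in> orbits Fg \<epsilon>" "P' \<in> orbits Fg \<epsilon>" "P \<noteq> P'"
    obtain \<gamma> \<gamma>' where "P = orbit \<gamma>" "P' = orbit \<gamma>'" using P(1,2) by (metis orbitsE)
    then show "\<Union>P \<inter> \<Union>P' = {}" using orbit_eq_if_mem P(3) by blast
  qed
  show "subsum (orbits Fg \<epsilon>) (Vorb Vg) = Vcos Vg (- halfGammaF Fg)"
    using subsum_Vcos[OF disj Vorb_eq] Union_orbits by simp
  have "\<gamma> + \<delta> + \<epsilon> \<notin> GammaF Fg"
    if P: "P \<in> orbits Fg \<epsilon>" "P' \<in> orbits Fg \<epsilon>" "P \<noteq> P'" "\<gamma> \<in> \<Union>P" "\<delta> \<in> \<Union>P'"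
    for P P' \<gamma> \<delta>
  proof
    assume "\<gamma> + \<delta> + \<epsilon> \<in> GammaF Fg"
    then have "\<delta> \<in> coset Fg (- \<gamma> - \<epsilon>)" unfolding mem_coset_iff diff_bar .
    then have "\<delta> \<in> \<Union> (orbit \<gamma>)" unfolding orbit_def by blast
    moreover obtain \<zeta> where "P = orbit \<zeta>" using P(1) by (rule orbitsE)
    then have "orbit \<gamma> = P" using P(4) orbit_eq_if_mem by blast
    ultimately show False using disjoint_family_onD[OF disj P(1-3)] P(5) by blast
  qed
  then show "orth_decomp b (Vcos Vg (- halfGammaF Fg)) (orbits Fg \<epsilon>) (Vorb Vg)"
    using orth_decomp_Vcos[OF disj Vorb_eq, of b] b_bilin b_shifted Union_orbits by metis
qed

lemma orth_decomp_half_not_half: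
  "orth_decomp b UNIV {0::nat, 1}
     (\<lambda>i. if i = 0 then Vcos Vg (halfGammaF Fg) else Vcos Vg (- halfGammaF Fg))"
proof -
  let ?g = "\<lambda>i::nat. if i = 0 then halfGammaF Fg else - halfGammaF Fg"
  have disj: "disjoint_family_on ?g {0, 1}"
    unfolding disjoint_family_on_def by simp
  have "orth_decomp b (Vcos Vg (\<Union>i\<in>{0::nat, 1}. ?g i)) {0, 1} (\<lambda>i. Vcos Vg (?g i))"
    by (rule orth_decomp_Vcos[OF disj _ b_bilin b_shifted]) (use halfGammaF_pair_iff in auto)
  moreover have "(\<Union>i\<in>{0::nat, 1}. ?g i) = UNIV" by auto
  moreover have "(\<lambda>i. Vcos Vg (?g i)) =
      (\<lambda>i. if i = 0 then Vcos Vg (halfGammaF Fg) else Vcos Vg (- halfGammaF Fg))"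
    by (simp add: if_distrib)
  ultimately show ?thesis using Vcos_UNIV by simp
qed

subsection \<open>The metabolic part\<close>

definition orbit_choice :: "'g set set \<Rightarrow> 'g set" where
  "orbit_choice P = (SOME \<Lambda>. \<Lambda> \<in> P)"

definition lagrangian_grades :: "'g set" where
  "lagrangian_grades = {\<gamma>. \<gamma> \<notin> halfGammaF Fg \<and> orbit_choice (orbit \<gamma>) = coset Fg \<gamma>}"

definition dual_grades :: "'g set" where
  "dual_grades = {\<gamma>. \<gamma> \<notin> halfGammaF Fg \<and> orbit_choice (orbit \<gamma>) \<noteq> coset Fg \<gamma>}"

lemma orbit_choice_mem: "orbit_choice (orbit \<gamma>) \<in> orbit \<gamma>"
  unfolding orbit_choice_def orbit_def by (rule someI[of _ "coset Fg \<gamma>"]) simp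

lemma GammaF_stable_lagrangian_grades: "GammaF_stable lagrangian_grades"
  and GammaF_stable_dual_grades: "GammaF_stable dual_grades"
proof -
  have "\<gamma> + d \<notin> halfGammaF Fg \<and> orbit (\<gamma> + d) = orbit \<gamma> \<and> coset Fg (\<gamma> + d) = coset Fg \<gamma>"
    if "\<gamma> \<notin> halfGammaF Fg" "d \<in> GammaF Fg" for \<gamma> d
    using that halfGammaF_diff_iff[of "\<gamma> + d" \<gamma>] orbit_eq_if_diff[of "\<gamma> + d" \<gamma>]
      coset_eq_iff[of "\<gamma> + d" \<gamma>] by simp
  then show "GammaF_stable lagrangian_grades" "GammaF_stable dual_grades"
    unfolding GammaF_stable_def lagrangian_grades_def dual_grades_def by auto
qed

lemma pair_outside_halfGammaF:
  assumes "\<gamma> \<notin> halfGammaF Fg" "\<gamma> + \<delta> + \<epsilon> \<in> GammaF Fg"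
  shows "\<delta> \<notin> halfGammaF Fg" "orbit \<delta> = orbit \<gamma>"
    "coset Fg \<delta> = coset Fg (- \<gamma> - \<epsilon>)" "coset Fg \<gamma> \<noteq> coset Fg (- \<gamma> - \<epsilon>)"
proof -
  show "\<delta> \<notin> halfGammaF Fg" using assms halfGammaF_pair_iff by blast
  show "orbit \<delta> = orbit \<gamma>" using assms(2) by (rule orbit_eq_if_pair)
  show "coset Fg \<delta> = coset Fg (- \<gamma> - \<epsilon>)" unfolding coset_eq_iff diff_bar by (rule assms(2))
  show "coset Fg \<gamma> \<noteq> coset Fg (- \<gamma> - \<epsilon>)"
    unfolding coset_eq_iff by (rule bar_diff_notin_GammaF[OF assms(1)])
qed

lemma pairs_only_with_lagrangian_dual: "pairs_only_with lagrangian_grades dual_grades"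
  unfolding pairs_only_with_def lagrangian_grades_def dual_grades_def
  using pair_outside_halfGammaF by auto

lemma pairs_only_with_dual_lagrangian: "pairs_only_with dual_grades lagrangian_grades"
  unfolding pairs_only_with_def
proof (intro ballI allI impI)
  fix \<gamma> \<delta> assume \<gamma>: "\<gamma> \<in> dual_grades" and pair: "\<gamma> + \<delta> + \<epsilon> \<in> GammaF Fg"
  then have "\<gamma> \<notin> halfGammaF Fg" "orbit_choice (orbit \<gamma>) \<noteq> coset Fg \<gamma>"
    unfolding dual_grades_def by auto
  moreover from this have "orbit_choice (orbit \<gamma>) = coset Fg (- \<gamma> - \<epsilon>)"
    using orbit_choice_mem[of \<gamma>] unfolding orbit_def by auto
  ultimately show "\<delta> \<in> lagrangian_grades"
    using pair_outside_halfGammaF[OF _ pair] unfolding lagrangian_grades_def by simp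
qed

lemma lagrangian_grades_no_pair:
  "\<gamma> \<in> lagrangian_grades \<Longrightarrow> \<delta> \<in> lagrangian_grades \<Longrightarrow> \<gamma> + \<delta> + \<epsilon> \<notin> GammaF Fg"
  using pairs_only_with_lagrangian_dual
  unfolding pairs_only_with_def lagrangian_grades_def dual_grades_def by blast

lemma lagrangian_grades_no_sum:
  "\<gamma> \<in> lagrangian_grades \<Longrightarrow> \<delta> \<in> lagrangian_grades \<Longrightarrow> \<gamma> + \<delta> \<notin> GammaF Fg"
  using lagrangian_grades_no_pair GammaF_add eps_GammaF by blast

lemma gdim_not_halfGammaF:
  "gdim Vg sc (Vcos Vg (- halfGammaF Fg)) = 2 * gdim Vg sc (Vcos Vg lagrangian_grades)"
proof -
  obtain B where B: "finite B" "hbasis Vg sc UNIV B" using finite_hbasis by auto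
  let ?B = "\<lambda>G. {v\<in>B. v \<in> Vcos Vg G}"
  let ?L = lagrangian_grades and ?D = dual_grades
  have bases: "hbasis Vg sc (Vcos Vg ?L) (?B ?L)" "hbasis Vg sc (Vcos Vg ?D) (?B ?D)"
    "hbasis Vg sc (Vcos Vg (- halfGammaF Fg)) (?B (- halfGammaF Fg))"
    using hbasis_Vcos[OF _ B] GammaF_stable_lagrangian_grades GammaF_stable_dual_grades
      GammaF_stable_Compl[OF GammaF_stable_halfGammaF] by auto
  have fin: "finite (?B G)" for G using B(1) by auto
  have "?B (- halfGammaF Fg) = ?B ?L \<union> ?B ?D" "?B ?L \<inter> ?B ?D = {}"
  proof -
    have "v \<in> Vcos Vg G \<longleftrightarrow> \<delta> \<in> G" if "v \<in> B" "v \<in> Vg \<delta>" for v \<delta> G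
      using homogeneous_in_Vcos_iff that zero_notin_lin_indep B(2) unfolding hbasis_def by metis
    moreover have "\<forall>v\<in>B. \<exists>\<delta>. v \<in> Vg \<delta>" using B(2) unfolding hbasis_def homogeneous_def by auto
    moreover have "- halfGammaF Fg = ?L \<union> ?D" "?L \<inter> ?D = {}"
      unfolding lagrangian_grades_def dual_grades_def by auto
    ultimately show "?B (- halfGammaF Fg) = ?B ?L \<union> ?B ?D" "?B ?L \<inter> ?B ?D = {}"
      by blast+
  qed
  then have "card (?B (- halfGammaF Fg)) = card (?B ?L) + card (?B ?D)"
    using card_Un_disjoint[OF fin fin] by simp
  moreover have "card (?B ?L) = card (?B ?D)"
    using card_hbasis_le_if_pairs_only_with[OF _ _ fin _ fin] bases
      GammaF_stable_lagrangian_grades GammaF_stable_dual_grades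
      pairs_only_with_lagrangian_dual pairs_only_with_dual_lagrangian
    by (meson antisym)
  ultimately show ?thesis using gdim_eq[OF fin] bases by simp
qed

lemma metabolic_not_halfGammaF: "metabolic sc Vg (Vcos Vg (- halfGammaF Fg)) q b"
  unfolding metabolic_def
proof (intro exI conjI ballI)
  show "graded_subspace Vg sc (Vcos Vg lagrangian_grades)"
    by (rule Vcos_graded_subspace[OF GammaF_stable_lagrangian_grades])
  show "Vcos Vg lagrangian_grades \<subseteq> Vcos Vg (- halfGammaF Fg)"
    by (rule Vcos_mono) (auto simp: lagrangian_grades_def)
  show "2 * gdim Vg sc (Vcos Vg lagrangian_grades) = gdim Vg sc (Vcos Vg (- halfGammaF Fg))"
    using gdim_not_halfGammaF by simp
  fix x assume x: "x \<in> Vcos Vg lagrangian_grades"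
  show "q x = 0" by (rule q_Vcos_eq_zero[OF lagrangian_grades_no_sum x])
  fix y assume y: "y \<in> Vcos Vg lagrangian_grades"
  show "b x y = 0"
    by (rule shifted_form_Vcos_eq_zero[OF b_bilin b_shifted x y lagrangian_grades_no_pair])
qed

end

theorem proposition3p4:
  fixes Fg :: "'g::ab_group_add \<Rightarrow> 'f::comm_ring_1 set"
    and sc :: "'f \<Rightarrow> 'v::ab_group_add \<Rightarrow> 'v"
    and Vg :: "'g \<Rightarrow> 'v set"
    and \<epsilon> :: 'g
    and q :: "'v \<Rightarrow> 'f"
    and b :: "'v \<Rightarrow> 'v \<Rightarrow> 'f"
    and T :: "'f qtype"
  assumes "divisible_torsion_free TYPE('g)"
    and "graded_field Fg"
    and "\<epsilon> \<in> GammaF Fg"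
    and "graded_vspace Fg sc Vg"
    and "eps_qspace Fg sc Vg \<epsilon> UNIV q b"
    and "qtype_ok Fg \<epsilon> T"
    and "has_type T \<epsilon> UNIV q b"
  shows "orth_decomp b UNIV {0::nat, 1}
           (\<lambda>i. if i = 0 then subsum (half_cosets Fg) (Vcos Vg) else subsum (orbits Fg \<epsilon>) (Vorb Vg))
       \<and> orth_decomp b (subsum (half_cosets Fg) (Vcos Vg)) (half_cosets Fg) (Vcos Vg)
       \<and> orth_decomp b (subsum (orbits Fg \<epsilon>) (Vorb Vg)) (orbits Fg \<epsilon>) (Vorb Vg)
       \<and> (\<forall>\<Lambda>\<in>half_cosets Fg. eps_qspace Fg sc Vg \<epsilon> (Vcos Vg \<Lambda>) q b \<and> has_type T \<epsilon> (Vcos Vg \<Lambda>) q b)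
       \<and> eps_qspace Fg sc Vg \<epsilon> (subsum (orbits Fg \<epsilon>) (Vorb Vg)) q b
       \<and> has_type T \<epsilon> (subsum (orbits Fg \<epsilon>) (Vorb Vg)) q b
       \<and> metabolic sc Vg (subsum (orbits Fg \<epsilon>) (Vorb Vg)) q b"
proof -
  interpret shifted_qspace Fg sc Vg \<epsilon> q b
    by unfold_locales (use assms in auto)
  note half = orth_decomp_half_cosets and not_half = orth_decomp_orbits
  have "eps_qspace Fg sc Vg \<epsilon> (Vcos Vg \<Lambda>) q b" if "\<Lambda> \<in> half_cosets Fg" for \<Lambda>
    using that eps_qspace_Vcos[OF _ pairs_only_with_half_coset] GammaF_stable_coset
    unfolding half_cosets_def by blast
  moreover have "eps_qspace Fg sc Vg \<epsilon> (Vcos Vg (- halfGammaF Fg)) q b"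
    by (rule eps_qspace_Vcos[OF GammaF_stable_Compl[OF GammaF_stable_halfGammaF]
          pairs_only_with_not_halfGammaF])
  ultimately show ?thesis
    unfolding half(1) not_half(1)
    using orth_decomp_half_not_half half(2) not_half(2) metabolic_not_halfGammaF
      has_type_subspace[OF assms(7) Vcos_zero] by blast
qed

end
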